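(* Let $\mathcal{D}$ be a distribution on $\mathbb{R}^d\times\mathbb{R}$ such that, for $(\mathbf{x},y)\sim\mathcal{D}$, $\|\mathbf{x}\|_\infty\le1$ and $|y|\le B$ with probability $1$, and suppose the second moments $\mathbb{E}_{\mathcal{D}}[x_i^2]$, $i\in[d]$, are known. Let $\bar{\mathbf{w}}$ be the output of DDAELR on $m$ i.i.d. examples with budget $k$, run with $\eta=\frac{1}{2B}\sqrt{\frac{\log 2d}{5m\left(\frac1k\|\mathbb{E}_{\mathcal{D}}[\mathbf{x}^2]\|_1+1\right)}}$. If $m\ge\log 2d$, then for every $\mathbf{w}^*\in\mathbb{R}^d$ with $\|\mathbf{w}^*\|_1\le B$, $$\mathbb{E}_{\mathcal{D},A}\big[L_{\mathcal{D}}(\bar{\mathbf{w}})\big]\le L_{\mathcal{D}}(\mathbf{w}^* )+4B^2\sqrt{\frac{5\log 2d\left(\frac1k\|\mathbb{E}_{\mathcal{D}}[\mathbf{x}^2]\|_1+1\right)}{m}}.$$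
   Context: Loss $\ell(\mathbf{w};\mathbf{x},y)=\frac12(\langle\mathbf{w},\mathbf{x}\rangle-y)^2$; risk $L_{\mathcal{D}}(\mathbf{w})=\mathbb{E}_{(\mathbf{x},y)\sim\mathcal{D}}[\ell]$. $\mathbb{E}_{\mathcal{D}}[\mathbf{x}^2]$ is the vector of second moments $\mathbb{E}_{\mathcal{D}}[x_i^2]$. $\mathrm{clip}(x,c)=\max\{\min\{x,c\},-c\}$. Algorithm GAELR (parameters $B,\eta>0$, probabilities $q_i$ summing to $1$, budget $k$; examples $(\mathbf{x}_t,y_t)$, $t=1..m$): $\mathbf{z}_1^\pm=\mathbf{1}_d$. For each $t$: $\mathbf{w}_t=(\mathbf{z}_t^+-\mathbf{z}_t^-)B/(\|\mathbf{z}_t^+\|_1+\|\mathbf{z}_t^-\|_1)$; for $r=1..k$ draw $i_{t,r}$ with probability $q_{i_{t,r}}$, $\widetilde{\mathbf{x}}_{t,r}=\frac{1}{q_{i_{t,r}}}\mathbf{x}_t[i_{t,r}]\mathbf{e}_{i_{t,r}}$; $\widetilde{\mathbf{x}}_t=\frac1k\sum_r\widetilde{\mathbf{x}}_{t,r}$; draw $j_t$ with probability $p_j=|w_{t,j}|/\|\mathbf{w}_t\|_1$, $\widetilde\phi_t=\frac{w_{t,j_t}}{p_{j_t}}\mathbf{x}_t[j_t]-y_t$; $\widetilde{\mathbf{g}}_t=\widetilde\phi_t\widetilde{\mathbf{x}}_t$; $\bar{\mathbf{g}}_t[i]=\mathrm{clip}(\widetilde{\mathbf{g}}_t[i],1/\eta)$;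 $\mathbf{z}_{t+1}^+[i]=\mathbf{z}_t^+[i]e^{-\eta\bar{\mathbf{g}}_t[i]}$, $\mathbf{z}_{t+1}^-[i]=\mathbf{z}_t^-[i]e^{\eta\bar{\mathbf{g}}_t[i]}$. Output $\frac1m\sum_t\mathbf{w}_t$. DDAELR is GAELR with $q_i=\mathbb{E}_{\mathcal{D}}[x_i^2]/\sum_{j=1}^d\mathbb{E}_{\mathcal{D}}[x_j^2]$. $\mathbb{E}_{\mathcal{D},A}$ is expectation over examples and algorithm randomness. *)

theory Defs
  imports "HOL-Probability.Probability"
begin

type_synonym 'n st3 = "(real ^ 'n) \<times> (real ^ 'n) \<times> (real ^ 'n)"

text \<open>Vectors in R^d are rendered as \<open>real ^ 'n\<close> with d = CARD('n).
  An example is a pair (x, y) :: (real ^ 'n) \<times> real.\<close>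

definition sq_loss :: "real ^ 'n \<Rightarrow> real ^ 'n \<Rightarrow> real \<Rightarrow> real" where
  "sq_loss w x y = (1/2) * (w \<bullet> x - y)^2"

definition risk :: "((real ^ 'n) \<times> real) measure \<Rightarrow> real ^ 'n \<Rightarrow> real" where
  "risk D w = (\<integral>p. sq_loss w (fst p) (snd p) \<partial>D)"

definition l1norm :: "real ^ 'n \<Rightarrow> real" where
  "l1norm v = (\<Sum>i\<in>UNIV. \<bar>v $ i\<bar>)"

definition linfnorm :: "real ^ 'n \<Rightarrow> real" where
  "linfnorm v = Max (range (\<lambda>i. \<bar>v $ i\<bar>))"

definition clip :: "real \<Rightarrow> real \<Rightarrow> real" where
  "clip x c = max (min x c) (- c)"

definition second_moments :: "((real ^ 'n) \<times> real) measure \<Rightarrow> real ^ 'n" where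
  "second_moments D = (\<chi> i. \<integral>p. (fst p $ i)^2 \<partial>D)"

fun sum_draws :: "'n::finite pmf \<Rightarrow> real ^ 'n \<Rightarrow> nat \<Rightarrow> (real ^ 'n) pmf" where
  "sum_draws q x 0 = return_pmf 0"
| "sum_draws q x (Suc r) =
     do { i \<leftarrow> q; s \<leftarrow> sum_draws q x r;
          return_pmf (s + (x $ i / pmf q i) *\<^sub>R axis i 1) }"

definition xtilde_pmf :: "'n::finite pmf \<Rightarrow> nat \<Rightarrow> real ^ 'n \<Rightarrow> (real ^ 'n) pmf" where
  "xtilde_pmf q k x = map_pmf (\<lambda>s. (1 / real k) *\<^sub>R s) (sum_draws q x k)"

text \<open>Distribution p_j = |w_j| / ||w||_1 (irrelevant, taken uniform, when w = 0).\<close>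
definition wdist :: "real ^ 'n::finite \<Rightarrow> 'n pmf" where
  "wdist w = (if w = 0 then pmf_of_set UNIV
              else embed_pmf (\<lambda>j. \<bar>w $ j\<bar> / l1norm w))"

text \<open>phi = (w_j / p_j) x[j] - y; for p_j > 0 we have w_j / p_j = sgn(w_j) ||w||_1.\<close>
definition phi_pmf :: "real ^ 'n::finite \<Rightarrow> real ^ 'n \<Rightarrow> real \<Rightarrow> real pmf" where
  "phi_pmf w x y = map_pmf (\<lambda>j. sgn (w $ j) * l1norm w * x $ j - y) (wdist w)"

definition weight :: "real \<Rightarrow> real ^ 'n \<Rightarrow> real ^ 'n \<Rightarrow> real ^ 'n" where
  "weight B zp zm = (B / (l1norm zp + l1norm zm)) *\<^sub>R (zp - zm)"

text \<open>One round of GAELR; state = (z+, z-, sum of the w_t so far).\<close>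
definition gaelr_step ::
  "real \<Rightarrow> real \<Rightarrow> 'n::finite pmf \<Rightarrow> nat \<Rightarrow> (real ^ 'n) \<times> real
   \<Rightarrow> 'n st3 \<Rightarrow> ('n st3) pmf" where
  "gaelr_step B \<eta> q k ex st =
     (case st of (zp, zm, acc) \<Rightarrow>
      (let w = weight B zp zm in
       do { xt \<leftarrow> xtilde_pmf q k (fst ex);
            ph \<leftarrow> phi_pmf w (fst ex) (snd ex);
            let g = ph *\<^sub>R xt;
            let gb = (\<chi> i. clip (g $ i) (1 / \<eta>));
            return_pmf ((\<chi> i. zp $ i * exp (- \<eta> * gb $ i)),
                        (\<chi> i. zm $ i * exp (\<eta> * gb $ i)),
                        acc + w) }))"

fun gaelr_run ::
  "real \<Rightarrow> real \<Rightarrow> 'n::finite pmf \<Rightarrow> nat \<Rightarrow> (nat \<Rightarrow> (real ^ 'n) \<times> real) \<Rightarrow> nat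
   \<Rightarrow> ('n st3) pmf" where
  "gaelr_run B \<eta> q k S 0 = return_pmf (\<chi> i. 1, \<chi> i. 1, 0)"
| "gaelr_run B \<eta> q k S (Suc t) = gaelr_run B \<eta> q k S t \<bind> gaelr_step B \<eta> q k (S t)"

definition GAELR ::
  "real \<Rightarrow> real \<Rightarrow> 'n::finite pmf \<Rightarrow> nat \<Rightarrow> nat \<Rightarrow> (nat \<Rightarrow> (real ^ 'n) \<times> real) \<Rightarrow> (real ^ 'n) pmf" where
  "GAELR B \<eta> q k m S = map_pmf (\<lambda>(zp, zm, acc). (1 / real m) *\<^sub>R acc) (gaelr_run B \<eta> q k S m)"

definition ddaelr_q :: "((real ^ 'n::finite) \<times> real) measure \<Rightarrow> 'n pmf" where
  "ddaelr_q D = embed_pmf (\<lambda>i. second_moments D $ i / l1norm (second_moments D))"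

definition DDAELR ::
  "((real ^ 'n::finite) \<times> real) measure \<Rightarrow> real \<Rightarrow> real \<Rightarrow> nat \<Rightarrow> nat \<Rightarrow> (nat \<Rightarrow> (real ^ 'n) \<times> real) \<Rightarrow> (real ^ 'n) pmf" where
  "DDAELR D B \<eta> k m S = GAELR B \<eta> (ddaelr_q D) k m S"

end

theory Submission
  imports Defs
begin

(* The analysis is a potential-function argument for exponentiated gradient with unbiased,
   clipped gradient estimates. Write u for the comparator, W = ||z+||_1 + ||z-||_1 and
   V = ||E[x^2]||_1 / k + 1. The potential after t rounds,
     t (L(average of w_1 .. w_t) - L(u)) + (B/eta) ln W - (1/eta) sum_i u_i ln z+_i - 12 eta B^3 V t,
   does not increase in expectation over one round: convexity of L handles the running
   average, exp a <= 1 + a + a^2 for |a| <= 1 (guaranteed by the clipping) bounds the growth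
   of ln W by minus the linearised loss plus a variance term, and the estimators of x and of
   <w,x> - y are unbiased, with second moments bounded by V and (2B)^2 respectively.
   Initially the potential is (B/eta) ln 2d, and after m rounds the comparator term is at most
   (B/eta) ln W because ||u||_1 <= B. Hence the expected excess risk of the average is at most
   12 eta B^3 V + B ln(2d) / (eta m), and the chosen eta balances the two terms. *)

section \<open>Expectations over finite distributions\<close>

lemma expectation_bind_pmf_finite:
  fixes h :: "'b \<Rightarrow> real"
  assumes "finite (set_pmf p)" "\<And>a. a \<in> set_pmf p \<Longrightarrow> finite (set_pmf (f a))"
  shows "measure_pmf.expectation (p \<bind> f) h =
         measure_pmf.expectation p (\<lambda>a. measure_pmf.expectation (f a) h)"
proof -
  have "measure_pmf.expectation (p \<bind> f) h =
           (\<Sum>a\<in>set_pmf p. pmf p a *\<^sub>R measure_pmf.expectation (f a) h)"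
    using assms by (intro pmf_expectation_bind) auto
  also have "\<dots> = measure_pmf.expectation p (\<lambda>a. measure_pmf.expectation (f a) h)"
    using assms by (subst integral_measure_pmf[of "set_pmf p"]) auto
  finally show ?thesis .
qed

lemma expectation_pmf_finite_type:
  fixes q :: "'n::finite pmf" and f :: "'n \<Rightarrow> real"
  shows "measure_pmf.expectation q f = (\<Sum>i\<in>UNIV. pmf q i * f i)"
  by (subst integral_measure_pmf[of UNIV]) auto

lemma sum_pmf_UNIV: "(\<Sum>j\<in>UNIV. pmf (p :: 'n::finite pmf) j) = 1"
  using sum_pmf_eq_1[of UNIV p] by simp

lemma abs_expectation_pmf_le:
  fixes f :: "'a \<Rightarrow> real"
  assumes "finite (set_pmf M)" "\<And>x. x \<in> set_pmf M \<Longrightarrow> \<bar>f x\<bar> \<le> C"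
  shows "\<bar>measure_pmf.expectation M f\<bar> \<le> C"
proof -
  have "integrable M f" by (rule integrable_measure_pmf_finite[OF assms(1)])
  then have "\<bar>measure_pmf.expectation M f\<bar> \<le> measure_pmf.expectation M (\<lambda>x. \<bar>f x\<bar>)"
    using integral_abs_bound[of M f] by simp
  also have "\<dots> \<le> measure_pmf.expectation M (\<lambda>_. C)"
    using assms by (intro integral_mono_AE) (auto simp: AE_measure_pmf_iff integrable_measure_pmf_finite)
  finally show ?thesis by (simp add: measure_pmf.prob_space)
qed

lemma (in prob_space) abs_integral_le_const:
  fixes f :: "'a \<Rightarrow> real"
  assumes "f \<in> borel_measurable M" "\<And>x. \<bar>f x\<bar> \<le> C"
  shows "\<bar>\<integral>x. f x \<partial>M\<bar> \<le> C"
proof -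
  have f: "integrable M f" by (rule integrable_const_bound[where B = C]) (use assms in auto)
  have bounds: "- C \<le> f x" "f x \<le> C" for x
    using assms(2)[of x] by (simp_all add: abs_le_iff)
  have "(\<integral>x. f x \<partial>M) \<le> C"
    by (intro integral_le_const[OF f] AE_I2 bounds)
  moreover have "- C \<le> (\<integral>x. f x \<partial>M)"
    by (intro integral_ge_const[OF f] AE_I2 bounds)
  ultimately show ?thesis by (simp add: abs_le_iff)
qed

lemma pmf_embed_pmf_finite:
  fixes f :: "'n::finite \<Rightarrow> real"
  assumes "\<And>x. 0 \<le> f x" "(\<Sum>x\<in>UNIV. f x) = 1"
  shows "pmf (embed_pmf f) x = f x"
proof (rule pmf_embed_pmf)
  have "(\<integral>\<^sup>+x. ennreal (f x) \<partial>count_space UNIV) = ennreal (\<Sum>x\<in>UNIV. f x)"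
    using assms(1) by (simp add: nn_integral_count_space_finite sum_ennreal)
  then show "(\<integral>\<^sup>+x. ennreal (f x) \<partial>count_space UNIV) = 1" using assms(2) by simp
qed (rule assms(1))

section \<open>The \<open>\<ell>\<^sub>1\<close> norm and the weights\<close>

lemma l1norm_nonneg: "0 \<le> l1norm v"
  unfolding l1norm_def by (simp add: sum_nonneg)

lemma l1norm_eq_0_iff: "l1norm (v :: real ^ 'n::finite) = 0 \<longleftrightarrow> v = 0"
proof
  assume "l1norm v = 0"
  then have "\<forall>i\<in>UNIV. \<bar>v $ i\<bar> = 0"
    unfolding l1norm_def by (subst sum_nonneg_eq_0_iff[symmetric]) auto
  then show "v = 0" by (simp add: vec_eq_iff)
qed (simp add: l1norm_def)

lemma l1norm_pos_iff: "0 < l1norm (v :: real ^ 'n::finite) \<longleftrightarrow> v \<noteq> 0"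
  using l1norm_nonneg[of v] l1norm_eq_0_iff[of v] by linarith

lemma l1norm_of_pos:
  assumes "\<And>i. v $ i > 0"
  shows "l1norm v = (\<Sum>i\<in>UNIV. v $ i)"
  unfolding l1norm_def using assms by (intro sum.cong) (auto intro: abs_of_pos less_imp_le)

lemma l1norm_triangle: "l1norm (a + b) \<le> l1norm a + l1norm (b :: real ^ 'n::finite)"
  unfolding l1norm_def by (simp add: sum.distrib[symmetric] sum_mono abs_triangle_ineq)

lemma l1norm_scaleR: "l1norm (r *\<^sub>R a) = \<bar>r\<bar> * l1norm (a :: real ^ 'n::finite)"
  unfolding l1norm_def by (simp add: abs_mult sum_distrib_left)

lemma abs_nth_le_linfnorm: "\<bar>v $ i\<bar> \<le> linfnorm (v :: real ^ 'n::finite)"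
  unfolding linfnorm_def by (rule Max_ge) auto

lemma abs_inner_le_l1norm_linfnorm:
  fixes w x :: "real ^ 'n::finite"
  shows "\<bar>w \<bullet> x\<bar> \<le> l1norm w * linfnorm x"
proof -
  have "\<bar>w \<bullet> x\<bar> \<le> (\<Sum>i\<in>UNIV. \<bar>w $ i\<bar> * \<bar>x $ i\<bar>)"
    unfolding inner_vec_def by (rule order_trans[OF sum_abs]) (simp add: abs_mult)
  also have "\<dots> \<le> (\<Sum>i\<in>UNIV. \<bar>w $ i\<bar> * linfnorm x)"
    by (intro sum_mono mult_left_mono abs_nth_le_linfnorm) auto
  finally show ?thesis by (simp add: l1norm_def sum_distrib_right)
qed

lemma l1norm_weight_le:
  assumes "\<And>i. zp $ i > 0" "\<And>i. zm $ i > 0" "B \<ge> 0"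
  shows "l1norm (weight B zp zm) \<le> B"
proof -
  have pos: "l1norm zp + l1norm zm > 0"
    using assms by (simp add: l1norm_of_pos add_pos_pos sum_pos)
  have "l1norm (zp - zm) \<le> l1norm zp + l1norm zm"
    unfolding l1norm_def by (simp add: sum.distrib[symmetric] sum_mono abs_triangle_ineq4)
  then have "B / (l1norm zp + l1norm zm) * l1norm (zp - zm)
      \<le> B / (l1norm zp + l1norm zm) * (l1norm zp + l1norm zm)"
    using assms(3) pos by (intro mult_left_mono) auto
  then show ?thesis using pos assms(3) unfolding weight_def l1norm_scaleR by simp
qed

lemma abs_weight_nth_le:
  assumes "\<And>i. zp $ i > 0" "\<And>i. zm $ i > 0" "B \<ge> 0"
  shows "\<bar>weight B zp zm $ i\<bar> \<le> B * ((zp $ i + zm $ i) / (l1norm zp + l1norm zm))"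
proof -
  have pos: "l1norm zp + l1norm zm > 0"
    using assms by (simp add: l1norm_of_pos add_pos_pos sum_pos)
  have "\<bar>zp $ i - zm $ i\<bar> \<le> zp $ i + zm $ i" using assms(1,2)[of i] by auto
  then have "B / (l1norm zp + l1norm zm) * \<bar>zp $ i - zm $ i\<bar>
      \<le> B / (l1norm zp + l1norm zm) * (zp $ i + zm $ i)"
    using assms(3) pos by (intro mult_left_mono) auto
  then show ?thesis unfolding weight_def using assms(3) pos by (simp add: abs_mult)
qed

lemma coordinate_weight_nonneg:
  assumes "\<And>i. zp $ i > 0" "\<And>i. zm $ i > 0" "B \<ge> 0"
  shows "0 \<le> 2 * B * ((zp $ i + zm $ i) / (l1norm zp + l1norm zm)) + \<bar>v\<bar>"
  using assms l1norm_nonneg[of zp] l1norm_nonneg[of zm]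
  by (intro add_nonneg_nonneg mult_nonneg_nonneg divide_nonneg_nonneg abs_ge_zero)
     (auto intro: less_imp_le)

lemma sum_coordinate_weight:
  assumes "\<And>i. zp $ i > 0" "\<And>i. zm $ i > 0"
  shows "(\<Sum>i\<in>UNIV. 2 * B * ((zp $ i + zm $ i) / (l1norm zp + l1norm zm)) + \<bar>v $ i\<bar>)
    = 2 * B + l1norm v"
proof -
  have "(\<Sum>i\<in>UNIV. zp $ i + zm $ i) = l1norm zp + l1norm zm"
    using assms by (simp add: l1norm_of_pos sum.distrib)
  moreover have "0 < l1norm zp + l1norm zm"
    using assms by (simp add: l1norm_of_pos add_pos_pos sum_pos)
  ultimately have "(\<Sum>i\<in>UNIV. (zp $ i + zm $ i) / (l1norm zp + l1norm zm)) = 1"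
    by (simp add: sum_divide_distrib[symmetric])
  moreover have "(\<Sum>i\<in>UNIV. 2 * B * ((zp $ i + zm $ i) / (l1norm zp + l1norm zm)) + \<bar>v $ i\<bar>)
      = 2 * B * (\<Sum>i\<in>UNIV. (zp $ i + zm $ i) / (l1norm zp + l1norm zm)) + l1norm v"
    by (simp add: l1norm_def sum.distrib sum_distrib_left)
  ultimately show ?thesis by simp
qed

section \<open>The gradient estimator\<close>

lemma finite_set_pmf_sum_draws: "finite (set_pmf (sum_draws q x r))"
  by (induction r) auto

lemma finite_set_pmf_xtilde: "finite (set_pmf (xtilde_pmf q k x))"
  by (simp add: xtilde_pmf_def finite_set_pmf_sum_draws)

lemma finite_set_pmf_phi: "finite (set_pmf (phi_pmf w x y))"
  for w :: "real ^ 'n::finite"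
  by (simp add: phi_pmf_def)

lemma expectation_sum_draws_Suc:
  fixes h :: "real ^ 'n::finite \<Rightarrow> real"
  shows "measure_pmf.expectation (sum_draws q x (Suc r)) h =
    (\<Sum>j\<in>UNIV. pmf q j * measure_pmf.expectation (sum_draws q x r)
        (\<lambda>s. h (s + (x $ j / pmf q j) *\<^sub>R axis j 1)))"
  by (simp add: expectation_bind_pmf_finite finite_set_pmf_sum_draws expectation_pmf_finite_type)

lemma expectation_sum_draws_nth:
  fixes q :: "'n::finite pmf"
  shows "measure_pmf.expectation (sum_draws q x r) (\<lambda>s. s $ i) = real r * (pmf q i * (x $ i / pmf q i))"
proof (induction r)
  case (Suc r)
  let ?E = "measure_pmf.expectation (sum_draws q x r) (\<lambda>s. s $ i)"
  have "measure_pmf.expectation (sum_draws q x (Suc r)) (\<lambda>s. s $ i) =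
      (\<Sum>j\<in>UNIV. pmf q j * ?E + (if j = i then pmf q j * (x $ j / pmf q j) else 0))"
    unfolding expectation_sum_draws_Suc
    by (intro sum.cong refl)
       (auto simp: axis_def integrable_measure_pmf_finite finite_set_pmf_sum_draws distrib_left)
  also have "\<dots> = ?E + pmf q i * (x $ i / pmf q i)"
    by (simp add: sum.distrib sum_distrib_right[symmetric] sum_pmf_UNIV)
  finally show ?case using Suc by (simp add: algebra_simps)
qed simp

lemma expectation_sum_draws_nth_sq:
  fixes q :: "'n::finite pmf" and x :: "real ^ 'n" and i :: 'n
  defines "a \<equiv> pmf q i * (x $ i / pmf q i)^2" and "b \<equiv> pmf q i * (x $ i / pmf q i)"
  shows "measure_pmf.expectation (sum_draws q x r) (\<lambda>s. (s $ i)^2) =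
         real r * a + real r * (real r - 1) * b^2"
proof (induction r)
  case (Suc r)
  define E1 where "E1 = measure_pmf.expectation (sum_draws q x r) (\<lambda>s. s $ i)"
  define E2 where "E2 = measure_pmf.expectation (sum_draws q x r) (\<lambda>s. (s $ i)^2)"
  define c where "c j = (if j = i then x $ j / pmf q j else 0)" for j
  have "measure_pmf.expectation (sum_draws q x (Suc r)) (\<lambda>s. (s $ i)^2) =
     (\<Sum>j\<in>UNIV. pmf q j * measure_pmf.expectation (sum_draws q x r)
        (\<lambda>s. (s $ i)^2 + 2 * c j * s $ i + (c j)^2))"
    unfolding expectation_sum_draws_Suc
    by (intro sum.cong refl arg_cong2[where f="(*)"] Bochner_Integration.integral_cong)
       (auto simp: axis_def c_def power2_eq_square algebra_simps)
  also have "\<dots> = (\<Sum>j\<in>UNIV. pmf q j * (E2 + 2 * c j * E1 + (c j)^2))"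
    by (intro sum.cong refl arg_cong2[where f="(*)"])
       (simp add: E1_def E2_def integrable_measure_pmf_finite finite_set_pmf_sum_draws)
  also have "\<dots> = E2 * (\<Sum>j\<in>UNIV. pmf q j) + 2 * E1 * (\<Sum>j\<in>UNIV. pmf q j * c j)
      + (\<Sum>j\<in>UNIV. pmf q j * (c j)^2)"
    by (simp add: algebra_simps sum.distrib sum_distrib_left sum_distrib_right)
  also have "\<dots> = E2 + 2 * E1 * b + a"
    by (simp add: sum_pmf_UNIV c_def a_def b_def if_distrib[of "\<lambda>v. pmf q _ * v"]
        if_distrib[of "\<lambda>v. v^2"] cong: if_cong)
  also have "\<dots> = real (Suc r) * a + real (Suc r) * (real (Suc r) - 1) * b^2"
    using Suc expectation_sum_draws_nth[of q x r i]
    by (simp add: E1_def E2_def b_def algebra_simps power2_eq_square)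
  finally show ?case .
qed simp

lemma expectation_xtilde_nth:
  assumes "k \<ge> 1"
  shows "measure_pmf.expectation (xtilde_pmf q k x) (\<lambda>s. s $ i) = pmf q i * (x $ i / pmf q i)"
  using assms by (simp add: xtilde_pmf_def expectation_sum_draws_nth)

lemma expectation_xtilde_nth_sq:
  assumes "k \<ge> 1"
  shows "measure_pmf.expectation (xtilde_pmf q k x) (\<lambda>s. (s $ i)^2) =
     pmf q i * (x $ i / pmf q i)^2 / real k + (1 - 1 / real k) * (pmf q i * (x $ i / pmf q i))^2"
proof -
  have "measure_pmf.expectation (xtilde_pmf q k x) (\<lambda>s. (s $ i)^2) =
        measure_pmf.expectation (sum_draws q x k) (\<lambda>s. (s $ i)^2) / (real k)^2"
    by (simp add: xtilde_pmf_def power_mult_distrib power_divide)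
  also have "\<dots> = pmf q i * (x $ i / pmf q i)^2 / real k
      + (1 - 1 / real k) * (pmf q i * (x $ i / pmf q i))^2"
    unfolding expectation_sum_draws_nth_sq using assms by (simp add: field_simps power2_eq_square)
  finally show ?thesis .
qed

lemma expectation_xtilde_nth_sq_le:
  assumes "k \<ge> 1"
  shows "measure_pmf.expectation (xtilde_pmf q k x) (\<lambda>s. (s $ i)^2)
    \<le> (x $ i)^2 / pmf q i / real k + (x $ i)^2"
proof -
  have "pmf q i * (x $ i / pmf q i)^2 = (x $ i)^2 / pmf q i"
    by (cases "pmf q i = 0") (auto simp: power2_eq_square)
  moreover have "(1 - 1 / real k) * (pmf q i * (x $ i / pmf q i))^2 \<le> (x $ i)^2"
  proof -
    have "(pmf q i * (x $ i / pmf q i))^2 \<le> (x $ i)^2"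
      by (cases "pmf q i = 0") auto
    moreover have "0 \<le> 1 - 1 / real k" "1 - 1 / real k \<le> 1" using assms by auto
    ultimately show ?thesis by (meson mult_left_le_one_le order_trans zero_le_power2)
  qed
  ultimately show ?thesis unfolding expectation_xtilde_nth_sq[OF assms] by simp
qed

lemma pmf_wdist:
  "pmf (wdist w) j = (if w = 0 then 1 / real CARD('n) else \<bar>w $ j\<bar> / l1norm w)"
  for w :: "real ^ 'n::finite"
proof (cases "w = 0")
  case False
  then have pos: "l1norm w > 0" by (simp add: l1norm_pos_iff)
  have "(\<Sum>x\<in>UNIV. \<bar>w $ x\<bar> / l1norm w) = 1"
    using pos by (simp add: sum_divide_distrib[symmetric] l1norm_def)
  then show ?thesis using False pos by (simp add: wdist_def pmf_embed_pmf_finite)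
qed (simp add: wdist_def)

lemma expectation_phi_pmf:
  "measure_pmf.expectation (phi_pmf w x y) h =
     (\<Sum>j\<in>UNIV. pmf (wdist w) j * h (sgn (w $ j) * l1norm w * x $ j - y))"
  for w x :: "real ^ 'n::finite"
  by (simp add: phi_pmf_def expectation_pmf_finite_type)

lemma expectation_phi_pmf_unbiased:
  fixes w x :: "real ^ 'n::finite"
  shows "measure_pmf.expectation (phi_pmf w x y) (\<lambda>p. p) = w \<bullet> x - y"
proof -
  have "(\<Sum>j\<in>UNIV. pmf (wdist w) j * (sgn (w $ j) * l1norm w * x $ j)) = w \<bullet> x"
  proof (cases "w = 0")
    case False
    then have "l1norm w > 0" by (simp add: l1norm_pos_iff)
    with False show ?thesis unfolding inner_vec_def
      by (intro sum.cong refl) (simp add: pmf_wdist abs_mult_sgn mult.assoc[symmetric])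
  qed simp
  then show ?thesis
    by (simp add: expectation_phi_pmf right_diff_distrib sum_subtractf
        sum_distrib_right[symmetric] sum_pmf_UNIV)
qed

lemma abs_phi_sample_le:
  fixes w x :: "real ^ 'n::finite"
  assumes "linfnorm x \<le> 1" "\<bar>y\<bar> \<le> B"
  shows "\<bar>sgn (w $ j) * l1norm w * x $ j - y\<bar> \<le> l1norm w + B"
proof -
  have "\<bar>sgn (w $ j)\<bar> * \<bar>x $ j\<bar> \<le> 1"
    using abs_nth_le_linfnorm[of x j] assms(1) by (intro mult_le_one) (auto simp: abs_sgn_eq)
  then have "l1norm w * (\<bar>sgn (w $ j)\<bar> * \<bar>x $ j\<bar>) \<le> l1norm w"
    using l1norm_nonneg[of w] by (simp add: mult_left_le)
  then have "\<bar>sgn (w $ j) * l1norm w * x $ j\<bar> \<le> l1norm w"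
    by (simp add: abs_mult l1norm_nonneg abs_of_nonneg mult_ac)
  then show ?thesis using assms(2) by linarith
qed

lemma expectation_phi_pmf_sq_le:
  fixes w x :: "real ^ 'n::finite"
  assumes "linfnorm x \<le> 1" "\<bar>y\<bar> \<le> B"
  shows "measure_pmf.expectation (phi_pmf w x y) (\<lambda>p. p^2) \<le> (l1norm w + B)^2"
proof -
  have "(sgn (w $ j) * l1norm w * x $ j - y)^2 \<le> (l1norm w + B)^2" for j
    using power_mono[OF abs_phi_sample_le[OF assms, of w j] abs_ge_zero, of 2] by simp
  then have "measure_pmf.expectation (phi_pmf w x y) (\<lambda>p. p^2)
      \<le> (\<Sum>j\<in>UNIV. pmf (wdist w) j * (l1norm w + B)^2)"
    unfolding expectation_phi_pmf by (intro sum_mono mult_left_mono) auto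
  then show ?thesis by (simp add: sum_distrib_right[symmetric] sum_pmf_UNIV)
qed

text \<open>Unbiasedness needs the support hypothesis: where \<open>q\<^sub>i = 0\<close> coordinate \<open>i\<close> is never sampled.\<close>
lemma expectation_xtilde_inner:
  assumes "k \<ge> 1" "\<And>i. pmf q i = 0 \<Longrightarrow> x $ i = 0"
  shows "measure_pmf.expectation (xtilde_pmf q k x) (\<lambda>xt. xt \<bullet> v) = x \<bullet> v"
proof -
  have "pmf q i * (x $ i / pmf q i) = x $ i" for i
    using assms(2)[of i] by (cases "pmf q i = 0") auto
  then show ?thesis
    unfolding inner_vec_def using assms(1)
    by (simp add: integrable_measure_pmf_finite finite_set_pmf_xtilde expectation_xtilde_nth)
qed

lemma expectation_xtilde_weighted_sq_le:
  assumes "k \<ge> 1" "\<And>i. 0 \<le> c i"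
  shows "measure_pmf.expectation (xtilde_pmf q k x) (\<lambda>xt. \<Sum>i\<in>UNIV. (xt $ i)^2 * c i)
    \<le> (\<Sum>i\<in>UNIV. ((x $ i)^2 / pmf q i / real k + (x $ i)^2) * c i)"
proof -
  have "measure_pmf.expectation (xtilde_pmf q k x) (\<lambda>xt. \<Sum>i\<in>UNIV. (xt $ i)^2 * c i)
      = (\<Sum>i\<in>UNIV. measure_pmf.expectation (xtilde_pmf q k x) (\<lambda>xt. (xt $ i)^2) * c i)"
    by (simp add: integrable_measure_pmf_finite finite_set_pmf_xtilde)
  also have "\<dots> \<le> (\<Sum>i\<in>UNIV. ((x $ i)^2 / pmf q i / real k + (x $ i)^2) * c i)"
    using assms by (intro sum_mono mult_right_mono expectation_xtilde_nth_sq_le)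
  finally show ?thesis .
qed

section \<open>One exponentiated-gradient step\<close>

lemma exp_le_one_plus_sq:
  fixes a :: real
  assumes "\<bar>a\<bar> \<le> 1"
  shows "exp a \<le> 1 + a + a^2"
proof (cases "a \<ge> 0")
  case True then show ?thesis using exp_bound[of a] assms by simp
next
  case False
  define y where "y = - a"
  have y: "0 < y" "y \<le> 1" using False assms by (auto simp: y_def)
  have "1 \<le> (1 + y + y^2 / 2) * (1 - y + y^2)"
  proof -
    have "(1 + y + y^2 / 2) * (1 - y + y^2) = 1 + (y^2 / 2 + y^3 / 2 + y^4 / 2)"
      by (simp add: field_simps power2_eq_square power3_eq_cube power4_eq_xxxx)
    then show ?thesis using y by simp
  qed
  also have "\<dots> \<le> exp y * (1 - y + y^2)"
    using exp_lower_Taylor_quadratic[of y] y by (intro mult_right_mono) (auto simp: add_nonneg_pos)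
  finally have "1 / exp y \<le> 1 - y + y^2"
    by (simp add: divide_le_eq mult.commute)
  then show ?thesis by (simp add: y_def exp_minus inverse_eq_divide)
qed

text \<open>One multiplicative-weights step on the \<open>2d\<close> weights \<open>z\<^sup>\<plusminus>\<close>: via \<open>ln u \<le> u - 1\<close> and
  \<open>e\<^sup>a \<le> 1 + a + a\<^sup>2\<close> on \<open>|a| \<le> 1\<close>, which is where the clipping at \<open>1/\<eta>\<close> is needed.\<close>
lemma ln_potential_step_le:
  fixes zp zm g :: "real ^ 'n::finite"
  assumes eta: "\<eta> > 0" and B: "B > 0"
    and pos: "\<And>i. zp $ i > 0" "\<And>i. zm $ i > 0"
    and g: "\<And>i. \<bar>g $ i\<bar> \<le> 1 / \<eta>"
  shows "ln (l1norm (\<chi> i. zp $ i * exp (- \<eta> * g $ i)) + l1norm (\<chi> i. zm $ i * exp (\<eta> * g $ i)))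
         - ln (l1norm zp + l1norm zm)
       \<le> - ((\<eta> / B) * (g \<bullet> weight B zp zm))
         + \<eta>^2 * (\<Sum>i\<in>UNIV. ((zp $ i + zm $ i) / (l1norm zp + l1norm zm)) * (g $ i)^2)"
proof -
  define W where "W = l1norm zp + l1norm zm"
  define W' where "W' = l1norm (\<chi> i. zp $ i * exp (- \<eta> * g $ i))
    + l1norm (\<chi> i. zm $ i * exp (\<eta> * g $ i))"
  have W: "W = (\<Sum>i\<in>UNIV. zp $ i + zm $ i)"
    unfolding W_def using pos by (simp add: l1norm_of_pos sum.distrib)
  have Wpos: "W > 0" unfolding W by (intro sum_pos) (auto intro: add_pos_pos pos)
  have W': "W' = (\<Sum>i\<in>UNIV. zp $ i * exp (- \<eta> * g $ i) + zm $ i * exp (\<eta> * g $ i))"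
    unfolding W'_def using pos by (subst l1norm_of_pos, simp)+ (simp add: sum.distrib)
  have W'pos: "W' > 0" unfolding W' by (intro sum_pos) (auto intro!: add_pos_pos mult_pos_pos pos)
  have "\<bar>\<eta> * g $ i\<bar> \<le> 1" for i
    using g[of i] eta by (simp add: abs_mult field_simps)
  then have "W' \<le> (\<Sum>i\<in>UNIV. zp $ i * (1 + (- \<eta> * g $ i) + (- \<eta> * g $ i)^2)
                      + zm $ i * (1 + (\<eta> * g $ i) + (\<eta> * g $ i)^2))"
    unfolding W'
    by (intro sum_mono add_mono mult_left_mono exp_le_one_plus_sq) (use pos in \<open>auto intro: less_imp_le\<close>)
  also have "\<dots> = W - \<eta> * (\<Sum>i\<in>UNIV. g $ i * (zp $ i - zm $ i))
      + \<eta>^2 * (\<Sum>i\<in>UNIV. (zp $ i + zm $ i) * (g $ i)^2)"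
    unfolding W by (simp add: algebra_simps power2_eq_square sum.distrib sum_distrib_left sum_subtractf)
  finally have W'_le: "W' \<le> W - \<eta> * (\<Sum>i\<in>UNIV. g $ i * (zp $ i - zm $ i))
      + \<eta>^2 * (\<Sum>i\<in>UNIV. (zp $ i + zm $ i) * (g $ i)^2)" .
  have "ln W' - ln W = ln (W' / W)" using Wpos W'pos by (simp add: ln_div)
  also have "\<dots> \<le> W' / W - 1" using Wpos W'pos by (intro ln_le_minus_one) simp
  also have "\<dots> \<le> (W - \<eta> * (\<Sum>i\<in>UNIV. g $ i * (zp $ i - zm $ i))
      + \<eta>^2 * (\<Sum>i\<in>UNIV. (zp $ i + zm $ i) * (g $ i)^2)) / W - 1"
    using W'_le Wpos by (simp add: divide_right_mono)
  also have "\<dots> = - ((\<eta> / B) * (g \<bullet> weight B zp zm))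
      + \<eta>^2 * (\<Sum>i\<in>UNIV. ((zp $ i + zm $ i) / W) * (g $ i)^2)"
  proof -
    have "(\<eta> / B) * (g \<bullet> weight B zp zm) = \<eta> * (\<Sum>i\<in>UNIV. g $ i * (zp $ i - zm $ i)) / W"
      using B unfolding weight_def W_def[symmetric]
      by (simp add: inner_vec_def sum_distrib_left sum_divide_distrib algebra_simps diff_divide_distrib)
    moreover have "(\<Sum>i\<in>UNIV. ((zp $ i + zm $ i) / W) * (g $ i)^2)
        = (\<Sum>i\<in>UNIV. (zp $ i + zm $ i) * (g $ i)^2) / W"
      by (simp add: sum_divide_distrib)
    ultimately show ?thesis using Wpos by (simp add: field_simps)
  qed
  finally show ?thesis unfolding W_def W'_def .
qed

lemma abs_clip_le: "0 \<le> c \<Longrightarrow> \<bar>clip x c\<bar> \<le> c"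
  unfolding clip_def by auto

lemma clip_sq_le: "0 \<le> c \<Longrightarrow> (clip x c)^2 \<le> x^2"
  unfolding clip_def
  by (cases "x \<ge> 0") (auto simp: max_def min_def abs_le_square_iff[symmetric])

lemma abs_clip_error_le:
  assumes "\<eta> > 0"
  shows "\<bar>x - clip x (1/\<eta>)\<bar> \<le> \<eta> * x^2"
proof (cases "\<bar>x\<bar> \<le> 1/\<eta>")
  case True
  then have "clip x (1/\<eta>) = x" unfolding clip_def by auto
  then show ?thesis using assms by simp
next
  case False
  then have "\<eta> * \<bar>x\<bar> > 1" using assms by (simp add: field_simps)
  then have "\<bar>x\<bar> \<le> \<eta> * \<bar>x\<bar> * \<bar>x\<bar>" by (simp add: mult_le_cancel_right1)
  moreover have "\<bar>x - clip x (1/\<eta>)\<bar> \<le> \<bar>x\<bar>"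
    using False assms unfolding clip_def by (auto simp: max_def min_def abs_if)
  ultimately show ?thesis by (simp add: power2_eq_square abs_mult_self_eq)
qed

text \<open>Clipping costs at most \<open>\<eta> g\<^sup>2\<close> per coordinate, which is absorbed by doubling the
  quadratic term of the potential step.\<close>
lemma clip_linear_quadratic_le:
  fixes g u v p :: real
  assumes "\<eta> > 0" "B \<ge> 0" "0 \<le> p" "\<bar>u\<bar> \<le> B * p"
  shows "- (clip g (1/\<eta>) * (u - v)) + \<eta> * B * (p * (clip g (1/\<eta>))^2)
     \<le> - (g * (u - v)) + \<eta> * (g^2 * (2 * B * p + \<bar>v\<bar>))"
proof -
  let ?c = "clip g (1/\<eta>)"
  have "(g - ?c) * (u - v) \<le> \<bar>g - ?c\<bar> * \<bar>u - v\<bar>" by (metis abs_ge_self abs_mult)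
  also have "\<dots> \<le> (\<eta> * g^2) * (B * p + \<bar>v\<bar>)"
    using abs_clip_error_le[OF assms(1), of g] abs_triangle_ineq4[of u v] assms(4)
    by (intro mult_mono) auto
  finally have "(g - ?c) * (u - v) \<le> \<eta> * g^2 * (B * p + \<bar>v\<bar>)" .
  moreover have "\<eta> * B * (p * ?c^2) \<le> \<eta> * B * (p * g^2)"
    using clip_sq_le[of "1/\<eta>" g] assms by (intro mult_left_mono) auto
  moreover have "- (?c * (u - v)) = - (g * (u - v)) + (g - ?c) * (u - v)"
    by (simp add: algebra_simps)
  moreover have "\<eta> * (g^2 * (2 * B * p + \<bar>v\<bar>)) = \<eta> * g^2 * (B * p + \<bar>v\<bar>) + \<eta> * B * (p * g^2)"
    by (simp add: algebra_simps)
  ultimately show ?thesis by linarith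
qed

section \<open>The algorithm as a random process\<close>

definition gaelr_update ::
  "real \<Rightarrow> real \<Rightarrow> real ^ 'n::finite \<Rightarrow> real ^ 'n \<Rightarrow> real ^ 'n \<Rightarrow> real ^ 'n \<Rightarrow> real \<Rightarrow> 'n st3" where
  "gaelr_update B \<eta> zp zm acc xt ph =
    ((\<chi> i. zp $ i * exp (- \<eta> * clip ((ph *\<^sub>R xt) $ i) (1 / \<eta>))),
     (\<chi> i. zm $ i * exp (\<eta> * clip ((ph *\<^sub>R xt) $ i) (1 / \<eta>))),
     acc + weight B zp zm)"

lemma gaelr_step_eq:
  "gaelr_step B \<eta> q k (x, y) (zp, zm, acc) =
     xtilde_pmf q k x \<bind> (\<lambda>xt. phi_pmf (weight B zp zm) x y \<bind> (\<lambda>ph.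
       return_pmf (gaelr_update B \<eta> zp zm acc xt ph)))"
  by (simp add: gaelr_step_def gaelr_update_def Let_def)

lemma finite_set_pmf_gaelr_step: "finite (set_pmf (gaelr_step B \<eta> q k ex st))"
  by (cases ex; cases st) (auto simp: gaelr_step_eq finite_set_pmf_xtilde finite_set_pmf_phi)

lemma finite_set_pmf_gaelr_run: "finite (set_pmf (gaelr_run B \<eta> q k S t))"
  by (induction t) (auto simp: finite_set_pmf_gaelr_step)

lemma gaelr_run_cong_prefix:
  "(\<And>s. s < t \<Longrightarrow> S s = S' s) \<Longrightarrow> gaelr_run B \<eta> q k S t = gaelr_run B \<eta> q k S' t"
  by (induction t) auto

lemma expectation_gaelr_step:
  fixes h :: "'n::finite st3 \<Rightarrow> real"
  shows "measure_pmf.expectation (gaelr_step B \<eta> q k (x, y) (zp, zm, acc)) h =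
    measure_pmf.expectation (sum_draws q x k) (\<lambda>s. \<Sum>j\<in>UNIV.
       pmf (wdist (weight B zp zm)) j *
       h (gaelr_update B \<eta> zp zm acc ((1 / real k) *\<^sub>R s)
            (sgn (weight B zp zm $ j) * l1norm (weight B zp zm) * x $ j - y)))"
  unfolding gaelr_step_eq
  by (simp add: expectation_bind_pmf_finite finite_set_pmf_xtilde finite_set_pmf_phi
      expectation_phi_pmf xtilde_pmf_def map_pmf_def bind_assoc_pmf bind_return_pmf
      finite_set_pmf_sum_draws)

lemma expectation_gaelr_run_Suc:
  fixes h :: "'n::finite st3 \<Rightarrow> real"
  shows "measure_pmf.expectation (gaelr_run B \<eta> q k S (Suc t)) h =
    measure_pmf.expectation (gaelr_run B \<eta> q k S t)
      (\<lambda>st. measure_pmf.expectation (gaelr_step B \<eta> q k (S t) st) h)"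
  by (simp add: expectation_bind_pmf_finite finite_set_pmf_gaelr_run finite_set_pmf_gaelr_step)

lemma borel_measurable_vec_componentwise:
  fixes f :: "'a \<Rightarrow> real ^ 'n::finite"
  assumes "\<And>i. (\<lambda>x. f x $ i) \<in> borel_measurable M"
  shows "f \<in> borel_measurable M"
  using assms by (subst borel_measurable_euclidean_space)
    (auto simp: Basis_vec_def cart_eq_inner_axis[symmetric])

lemma borel_measurable_nth_comp [measurable (raw)]:
  "(f :: 'a \<Rightarrow> real ^ 'n::finite) \<in> borel_measurable M \<Longrightarrow> (\<lambda>x. f x $ i) \<in> borel_measurable M"
  by (rule measurable_compose[OF _ borel_measurable_nth])

text \<open>On product types \<open>borel\<close> is not syntactically a product measure, so projections need
  their own measurability rules.\<close>
lemma borel_measurable_fst_comp [measurable (raw)]: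
  fixes f :: "'a \<Rightarrow> ('b::topological_space) \<times> ('c::topological_space)"
  assumes "f \<in> borel_measurable M"
  shows "(\<lambda>x. fst (f x)) \<in> borel_measurable M"
  by (rule measurable_compose[OF assms borel_measurable_continuous_onI]) (intro continuous_intros)

lemma borel_measurable_snd_comp [measurable (raw)]:
  fixes f :: "'a \<Rightarrow> ('b::topological_space) \<times> ('c::topological_space)"
  assumes "f \<in> borel_measurable M"
  shows "(\<lambda>x. snd (f x)) \<in> borel_measurable M"
  by (rule measurable_compose[OF assms borel_measurable_continuous_onI]) (intro continuous_intros)

lemma borel_measurable_clip [measurable (raw)]:
  assumes [measurable]: "f \<in> borel_measurable M" "g \<in> borel_measurable M"
  shows "(\<lambda>x. clip (f x) (g x)) \<in> borel_measurable M"
  unfolding clip_def by measurable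

lemma borel_measurable_l1norm [measurable (raw)]:
  "(f :: 'a \<Rightarrow> real ^ 'n::finite) \<in> borel_measurable M \<Longrightarrow> (\<lambda>x. l1norm (f x)) \<in> borel_measurable M"
  unfolding l1norm_def by measurable

lemma borel_measurable_weight [measurable (raw)]:
  fixes f g :: "'a \<Rightarrow> real ^ 'n::finite"
  assumes [measurable]: "f \<in> borel_measurable M" "g \<in> borel_measurable M"
  shows "(\<lambda>x. weight B (f x) (g x)) \<in> borel_measurable M"
  unfolding weight_def by measurable

lemma borel_measurable_pmf_wdist [measurable (raw)]:
  fixes f :: "'a \<Rightarrow> real ^ 'n::finite"
  assumes [measurable]: "f \<in> borel_measurable M"
  shows "(\<lambda>x. pmf (wdist (f x)) j) \<in> borel_measurable M"
proof -
  have "(\<lambda>x. pmf (wdist (f x)) j) =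
      (\<lambda>x. if l1norm (f x) = 0 then 1 / real CARD('n) else \<bar>f x $ j\<bar> / l1norm (f x))"
    by (auto simp: pmf_wdist l1norm_eq_0_iff)
  also have "\<dots> \<in> borel_measurable M" by measurable
  finally show ?thesis .
qed

lemma borel_measurable_gaelr_update [measurable (raw)]:
  fixes Zp Zm Acc Xt :: "'a \<Rightarrow> real ^ 'n::finite"
  assumes [measurable]: "Zp \<in> borel_measurable M" "Zm \<in> borel_measurable M"
    "Acc \<in> borel_measurable M" "Xt \<in> borel_measurable M" "Ph \<in> borel_measurable M"
  shows "(\<lambda>z. gaelr_update B \<eta> (Zp z) (Zm z) (Acc z) (Xt z) (Ph z)) \<in> borel_measurable M"
proof -
  have "(\<lambda>z. (\<chi> i. Zp z $ i * exp (- \<eta> * clip ((Ph z *\<^sub>R Xt z) $ i) (1 / \<eta>))))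
      \<in> borel_measurable M"
    by (rule borel_measurable_vec_componentwise) simp
  moreover have "(\<lambda>z. (\<chi> i. Zm z $ i * exp (\<eta> * clip ((Ph z *\<^sub>R Xt z) $ i) (1 / \<eta>))))
      \<in> borel_measurable M"
    by (rule borel_measurable_vec_componentwise) simp
  ultimately show ?thesis unfolding gaelr_update_def by measurable
qed

lemma measurable_pair_comp:
  assumes f: "case_prod f \<in> borel_measurable (N \<Otimes>\<^sub>M M)"
    and h: "(\<lambda>x. h (fst x) (snd x)) \<in> measurable (N \<Otimes>\<^sub>M M') M"
  shows "(\<lambda>x. f (fst x) (h (fst x) (snd x)) :: real) \<in> borel_measurable (N \<Otimes>\<^sub>M M')"
proof -
  have "(\<lambda>x. (fst x, h (fst x) (snd x))) \<in> measurable (N \<Otimes>\<^sub>M M') (N \<Otimes>\<^sub>M M)"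
    using h by (intro measurable_Pair) auto
  from measurable_compose[OF this f] show ?thesis by simp
qed

lemma borel_measurable_expectation_sum_draws:
  fixes X :: "'p \<Rightarrow> real ^ 'n::finite" and q :: "'n pmf"
  assumes X [measurable]: "X \<in> borel_measurable N"
    and f: "case_prod f \<in> borel_measurable (N \<Otimes>\<^sub>M (borel :: (real ^ 'n) measure))"
  shows "(\<lambda>p. measure_pmf.expectation (sum_draws q (X p) r) (f p) :: real) \<in> borel_measurable N"
  using f
proof (induction r arbitrary: f)
  case 0
  have "(\<lambda>p. (p, 0 :: real ^ 'n)) \<in> measurable N (N \<Otimes>\<^sub>M borel)" by measurable
  from measurable_compose[OF this 0] show ?case by simp
next
  case (Suc r)
  have "(\<lambda>p. measure_pmf.expectation (sum_draws q (X p) (Suc r)) (f p)) =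
    (\<lambda>p. \<Sum>j\<in>UNIV. pmf q j * measure_pmf.expectation (sum_draws q (X p) r)
        (\<lambda>s. f p (s + (X p $ j / pmf q j) *\<^sub>R axis j 1)))"
    by (rule ext, rule expectation_sum_draws_Suc)
  also have "\<dots> \<in> borel_measurable N"
  proof (intro borel_measurable_sum borel_measurable_times borel_measurable_const Suc.IH)
    fix j
    have "(\<lambda>x. snd x + (X (fst x) $ j / pmf q j) *\<^sub>R axis j 1)
        \<in> measurable (N \<Otimes>\<^sub>M borel) (borel :: (real ^ 'n) measure)"
      by measurable
    from measurable_pair_comp[OF Suc.prems this]
    show "(\<lambda>(p, s). f p (s + (X p $ j / pmf q j) *\<^sub>R axis j 1)) \<in> borel_measurable (N \<Otimes>\<^sub>M borel)"
      by (simp add: case_prod_beta')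
  qed
  finally show ?case .
qed

lemma borel_measurable_expectation_gaelr_step:
  fixes X :: "'p \<Rightarrow> (real ^ 'n::finite) \<times> real" and ST :: "'p \<Rightarrow> 'n st3"
  assumes [measurable]: "X \<in> borel_measurable N" "ST \<in> borel_measurable N"
    and f: "case_prod f \<in> borel_measurable (N \<Otimes>\<^sub>M (borel :: 'n st3 measure))"
  shows "(\<lambda>p. measure_pmf.expectation (gaelr_step B \<eta> q k (X p) (ST p)) (f p) :: real)
    \<in> borel_measurable N"
proof -
  define w where "w p = weight B (fst (ST p)) (fst (snd (ST p)))" for p
  define G where "G p s = (\<Sum>j\<in>UNIV. pmf (wdist (w p)) j *
       f p (gaelr_update B \<eta> (fst (ST p)) (fst (snd (ST p))) (snd (snd (ST p)))
            ((1 / real k) *\<^sub>R s) (sgn (w p $ j) * l1norm (w p) * fst (X p) $ j - snd (X p))))"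
    for p s
  have eq: "measure_pmf.expectation (gaelr_step B \<eta> q k (X p) (ST p)) (f p) =
      measure_pmf.expectation (sum_draws q (fst (X p)) k) (G p)" for p
  proof -
    obtain x y zp zm acc where "X p = (x, y)" "ST p = (zp, zm, acc)" by (metis prod.exhaust)
    then show ?thesis unfolding G_def w_def by (simp add: expectation_gaelr_step)
  qed
  have [measurable]: "w \<in> borel_measurable N" unfolding w_def by measurable
  have "(\<lambda>x. G (fst x) (snd x)) \<in> borel_measurable (N \<Otimes>\<^sub>M (borel :: (real ^ 'n) measure))"
    unfolding G_def
  proof (intro borel_measurable_sum borel_measurable_times)
    fix j
    show "(\<lambda>x. pmf (wdist (w (fst x))) j) \<in> borel_measurable (N \<Otimes>\<^sub>M borel)" by measurable
    have "(\<lambda>x. gaelr_update B \<eta> (fst (ST (fst x))) (fst (snd (ST (fst x)))) (snd (snd (ST (fst x))))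
           ((1 / real k) *\<^sub>R snd x)
           (sgn (w (fst x) $ j) * l1norm (w (fst x)) * fst (X (fst x)) $ j - snd (X (fst x))))
        \<in> measurable (N \<Otimes>\<^sub>M borel) borel"
      by measurable
    from measurable_pair_comp[OF f this]
    show "(\<lambda>x. f (fst x) (gaelr_update B \<eta> (fst (ST (fst x))) (fst (snd (ST (fst x))))
           (snd (snd (ST (fst x)))) ((1 / real k) *\<^sub>R snd x)
           (sgn (w (fst x) $ j) * l1norm (w (fst x)) * fst (X (fst x)) $ j - snd (X (fst x)))))
        \<in> borel_measurable (N \<Otimes>\<^sub>M borel)" .
  qed
  then have "(\<lambda>p. measure_pmf.expectation (sum_draws q (fst (X p)) k) (G p)) \<in> borel_measurable N"
    by (intro borel_measurable_expectation_sum_draws) (simp_all add: case_prod_beta')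
  then show ?thesis unfolding eq .
qed

lemma borel_measurable_expectation_gaelr_run:
  fixes SS :: "'p \<Rightarrow> nat \<Rightarrow> (real ^ 'n::finite) \<times> real"
  assumes "\<And>s. s < t \<Longrightarrow> (\<lambda>p. SS p s) \<in> borel_measurable N"
    and "case_prod f \<in> borel_measurable (N \<Otimes>\<^sub>M (borel :: 'n st3 measure))"
  shows "(\<lambda>p. measure_pmf.expectation (gaelr_run B \<eta> q k (SS p) t) (f p) :: real)
    \<in> borel_measurable N"
  using assms
proof (induction t arbitrary: f)
  case 0
  have "(\<lambda>p. (p, ((\<chi> i. 1), (\<chi> i. 1), 0) :: 'n st3)) \<in> measurable N (N \<Otimes>\<^sub>M borel)" by measurable
  from measurable_compose[OF this 0(2)] show ?case by simp
next
  case (Suc t)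
  define f' where "f' p st = measure_pmf.expectation (gaelr_step B \<eta> q k (SS p t) st) (f p)" for p st
  have f': "case_prod f' \<in> borel_measurable (N \<Otimes>\<^sub>M (borel :: 'n st3 measure))"
  proof -
    have "(\<lambda>x. SS (fst x) t) \<in> borel_measurable (N \<Otimes>\<^sub>M (borel :: 'n st3 measure))"
      using measurable_compose[OF measurable_fst Suc.prems(1)[of t]] by simp
    moreover have "case_prod (\<lambda>x. f (fst x))
        \<in> borel_measurable ((N \<Otimes>\<^sub>M (borel :: 'n st3 measure)) \<Otimes>\<^sub>M (borel :: 'n st3 measure))"
    proof -
      have "(\<lambda>z. (fst (fst z), snd z)) \<in> measurable ((N \<Otimes>\<^sub>M (borel :: 'n st3 measure))
          \<Otimes>\<^sub>M (borel :: 'n st3 measure)) (N \<Otimes>\<^sub>M borel)"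
        by measurable
      from measurable_compose[OF this Suc.prems(2)] show ?thesis by (simp add: case_prod_beta')
    qed
    ultimately show ?thesis
      using borel_measurable_expectation_gaelr_step[OF _ measurable_snd, of _ _ _ B \<eta> q k]
      unfolding f'_def by (simp add: case_prod_beta')
  qed
  show ?case
    unfolding expectation_gaelr_run_Suc f'_def[symmetric]
    by (rule Suc.IH[OF _ f']) (use Suc.prems in auto)
qed

section \<open>Square loss under bounded examples\<close>

lemma sq_loss_diff_le_gradient:
  fixes w ws x :: "real ^ 'n"
  shows "sq_loss w x y - sq_loss ws x y \<le> ((w \<bullet> x - y) *\<^sub>R x) \<bullet> (w - ws)"
proof -
  define s where "s = w \<bullet> x - y"
  define t where "t = ws \<bullet> x - y"
  have "((w \<bullet> x - y) *\<^sub>R x) \<bullet> (w - ws) = s * (s - t)"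
    by (simp add: s_def t_def inner_diff_right inner_commute)
  moreover have "(1/2) * s^2 - (1/2) * t^2 - s * (s - t) = - (1/2) * (s - t)^2"
    by (simp add: algebra_simps power2_eq_square)
  moreover have "0 \<le> (s - t)^2" by simp
  ultimately show ?thesis unfolding sq_loss_def s_def[symmetric] t_def[symmetric]
    by linarith
qed

lemma abs_sq_loss_le:
  assumes "linfnorm x \<le> 1" "\<bar>y\<bar> \<le> B"
  shows "\<bar>sq_loss w x y\<bar> \<le> (1/2) * (l1norm w + B)^2"
proof -
  have "\<bar>w \<bullet> x\<bar> \<le> l1norm w"
    using abs_inner_le_l1norm_linfnorm[of w x] assms(1) l1norm_nonneg[of w]
    by (meson mult_left_le order_trans)
  then have "\<bar>w \<bullet> x - y\<bar> \<le> l1norm w + B" using assms(2) by linarith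
  then have "(w \<bullet> x - y)^2 \<le> (l1norm w + B)^2"
    using power_mono[OF _ abs_ge_zero, of _ _ 2] by fastforce
  then show ?thesis unfolding sq_loss_def by simp
qed

locale bounded_regression =
  fixes D :: "((real ^ 'n::finite) \<times> real) measure" and B :: real
  assumes prob_space_D: "prob_space D" and sets_D: "sets D = sets borel"
    and bounded_examples: "AE p in D. linfnorm (fst p) \<le> 1 \<and> \<bar>snd p\<bar> \<le> B"
    and B_pos: "B > 0"
begin

sublocale prob_space D by (rule prob_space_D)

lemma measurable_D_eq: "measurable D M = measurable borel M"
  by (rule measurable_cong_sets[OF sets_D refl])

lemma measurable_into_D_eq: "measurable N D = measurable N borel"
  by (rule measurable_cong_sets[OF refl sets_D])

lemma borel_measurable_nth_fst [measurable]: "(\<lambda>p. fst p $ i) \<in> borel_measurable D"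
  unfolding measurable_D_eq borel_prod[symmetric] by measurable

lemma AE_abs_nth_le_1: "AE p in D. \<bar>fst p $ i\<bar> \<le> 1"
  using bounded_examples by eventually_elim (use abs_nth_le_linfnorm order_trans in blast)

lemma AE_nth_sq_le_1: "AE p in D. (fst p $ i)^2 \<le> 1"
  using AE_abs_nth_le_1 by eventually_elim (simp add: abs_square_le_1)

lemma integrable_nth_sq: "integrable D (\<lambda>p. (fst p $ i)^2)"
  by (rule integrable_const_bound[where B=1]) (use AE_nth_sq_le_1 in auto)

lemma AE_abs_sq_loss_le: "AE p in D. \<bar>sq_loss w (fst p) (snd p)\<bar> \<le> (1/2) * (l1norm w + B)^2"
  using bounded_examples by eventually_elim (intro abs_sq_loss_le; simp)

lemma integrable_sq_loss: "integrable D (\<lambda>p. sq_loss w (fst p) (snd p))"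
proof (rule integrable_const_bound[where B="(1/2) * (l1norm w + B)^2"])
  show "(\<lambda>p. sq_loss w (fst p) (snd p)) \<in> borel_measurable D"
    unfolding measurable_D_eq sq_loss_def borel_prod[symmetric] by measurable
qed (use AE_abs_sq_loss_le in simp)

lemma risk_nonneg: "0 \<le> risk D w"
  unfolding risk_def sq_loss_def by (intro integral_nonneg_AE) auto

lemma risk_le: "risk D w \<le> (1/2) * (l1norm w + B)^2"
proof -
  have "risk D w \<le> (\<integral>p. (1/2) * (l1norm w + B)^2 \<partial>D)"
    unfolding risk_def
  proof (intro integral_mono_AE integrable_sq_loss)
    show "AE p in D. sq_loss w (fst p) (snd p) \<le> (1/2) * (l1norm w + B)^2"
      using AE_abs_sq_loss_le[of w] by eventually_elim (simp only: abs_le_iff)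
  qed simp
  then show ?thesis by (simp add: prob_space)
qed

lemma risk_le_if_l1norm_le: "l1norm w \<le> B \<Longrightarrow> risk D w \<le> 2 * B^2"
  using risk_le[of w] power_mono[of "l1norm w + B" "B + B" 2] l1norm_nonneg[of w] B_pos
  by (simp add: power2_eq_square)

lemma risk_convex_comb:
  assumes "0 \<le> a" "a \<le> 1"
  shows "risk D (a *\<^sub>R u + (1 - a) *\<^sub>R v) \<le> a * risk D u + (1 - a) * risk D v"
proof -
  have "sq_loss (a *\<^sub>R u + (1 - a) *\<^sub>R v) x y \<le> a * sq_loss u x y + (1 - a) * sq_loss v x y" for x y
  proof -
    define s where "s = u \<bullet> x - y"
    define t where "t = v \<bullet> x - y"
    have "(a *\<^sub>R u + (1 - a) *\<^sub>R v) \<bullet> x - y = a * s + (1 - a) * t"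
      by (simp add: s_def t_def inner_add_left algebra_simps)
    moreover have "a * s^2 + (1 - a) * t^2 - (a * s + (1 - a) * t)^2 = a * (1 - a) * (s - t)^2"
      by (simp add: algebra_simps power2_eq_square)
    moreover have "0 \<le> a * (1 - a) * (s - t)^2" using assms by simp
    ultimately show ?thesis unfolding sq_loss_def s_def[symmetric] t_def[symmetric] by simp
  qed
  then have "risk D (a *\<^sub>R u + (1 - a) *\<^sub>R v)
      \<le> (\<integral>p. a * sq_loss u (fst p) (snd p) + (1 - a) * sq_loss v (fst p) (snd p) \<partial>D)"
    unfolding risk_def by (intro integral_mono integrable_sq_loss Bochner_Integration.integrable_add integrable_mult_right)
  also have "\<dots> = a * risk D u + (1 - a) * risk D v"
    unfolding risk_def by (simp add: integrable_sq_loss)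
  finally show ?thesis .
qed

lemma borel_measurable_risk [measurable]: "risk D \<in> borel_measurable borel"
proof (rule borel_measurable_continuous_onI, rule convex_on_continuous)
  show "convex_on UNIV (risk D)"
    by (rule convex_onI) (use risk_convex_comb[of "1 - _"] in simp_all)
qed simp_all

lemma borel_measurable_risk_comp [measurable (raw)]:
  "f \<in> borel_measurable M \<Longrightarrow> (\<lambda>x. risk D (f x)) \<in> borel_measurable M"
  by (rule measurable_compose[OF _ borel_measurable_risk])

lemma second_moments_nonneg: "0 \<le> second_moments D $ i"
  unfolding second_moments_def by (simp add: integral_nonneg_AE)

lemma second_moments_le_1: "second_moments D $ i \<le> 1"
proof -
  have "(\<integral>p. (fst p $ i)^2 \<partial>D) \<le> (\<integral>p. 1 \<partial>D)"
    by (rule integral_mono_AE[OF integrable_nth_sq]) (use AE_nth_sq_le_1 in simp_all)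
  then show ?thesis unfolding second_moments_def by (simp add: prob_space)
qed

lemma AE_nth_eq_0_if_second_moments_eq_0:
  assumes "second_moments D $ i = 0"
  shows "AE p in D. fst p $ i = 0"
  using assms integral_nonneg_eq_0_iff_AE[OF integrable_nth_sq[of i]]
  unfolding second_moments_def by simp

lemma l1norm_second_moments: "l1norm (second_moments D) = (\<Sum>i\<in>UNIV. second_moments D $ i)"
  unfolding l1norm_def using second_moments_nonneg by simp

end

section \<open>Invariants of the weights\<close>

definition gaelr_invariant :: "real \<Rightarrow> nat \<Rightarrow> 'n::finite st3 \<Rightarrow> bool" where
  "gaelr_invariant B t st = (case st of (zp, zm, acc) \<Rightarrow>
     (\<forall>i. 0 < zp $ i \<and> zm $ i = 1 / zp $ i \<and> \<bar>ln (zp $ i)\<bar> \<le> real t)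
     \<and> l1norm acc \<le> real t * B \<and> (t = 0 \<longrightarrow> acc = 0))"

lemma gaelr_invariant_init: "gaelr_invariant B 0 ((\<chi> i. 1), (\<chi> i. 1), 0)"
  by (simp add: gaelr_invariant_def l1norm_def)

lemma gaelr_invariant_update:
  assumes inv: "gaelr_invariant B t (zp, zm, acc)" and "\<eta> > 0" "B \<ge> 0"
  shows "gaelr_invariant B (Suc t) (gaelr_update B \<eta> zp zm acc xt ph)"
proof -
  define gb where "gb i = clip (ph * xt $ i) (1 / \<eta>)" for i
  have zp: "0 < zp $ i" "zm $ i = 1 / zp $ i" "\<bar>ln (zp $ i)\<bar> \<le> real t" for i
    using inv by (auto simp: gaelr_invariant_def)
  have clipped: "\<bar>\<eta> * gb i\<bar> \<le> 1" for i
    using abs_clip_le[of "1/\<eta>" "ph * xt $ i"] \<open>\<eta> > 0\<close>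
    by (simp add: gb_def abs_mult field_simps)
  have "\<bar>ln (zp $ i * exp (- \<eta> * gb i))\<bar> \<le> real (Suc t)" for i
    using zp(1,3)[of i] clipped[of i] by (simp add: ln_mult abs_le_iff)
  moreover have "zm $ i * exp (\<eta> * gb i) = 1 / (zp $ i * exp (- \<eta> * gb i))" for i
    using zp(1,2)[of i] by (simp add: exp_minus field_simps)
  moreover have "l1norm (acc + weight B zp zm) \<le> real (Suc t) * B"
    using l1norm_triangle[of acc "weight B zp zm"] l1norm_weight_le[of zp zm B] zp(1,2) \<open>B \<ge> 0\<close> inv
    by (simp add: gaelr_invariant_def algebra_simps)
  ultimately show ?thesis
    using zp(1) by (simp add: gaelr_invariant_def gaelr_update_def gb_def[symmetric])
qed

lemma gaelr_invariant_step:
  assumes "gaelr_invariant B t st" "\<eta> > 0" "B \<ge> 0" "st' \<in> set_pmf (gaelr_step B \<eta> q k ex st)"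
  shows "gaelr_invariant B (Suc t) st'"
  using assms gaelr_invariant_update[of B t _ _ _ \<eta>]
  by (cases ex; cases st) (auto simp: gaelr_step_eq)

lemma gaelr_invariant_run:
  assumes "\<eta> > 0" "B \<ge> 0" "st \<in> set_pmf (gaelr_run B \<eta> q k S t)"
  shows "gaelr_invariant B t st"
  using assms(3)
proof (induction t arbitrary: st)
  case (Suc t)
  then obtain st0 where "st0 \<in> set_pmf (gaelr_run B \<eta> q k S t)"
    and "st \<in> set_pmf (gaelr_step B \<eta> q k (S t) st0)" by auto
  then show ?case using Suc.IH gaelr_invariant_step[OF _ assms(1,2)] by blast
qed (simp add: gaelr_invariant_init)

lemma gaelr_invariant_total_weight:
  fixes zp zm acc :: "real ^ 'n::finite"
  assumes "gaelr_invariant B t (zp, zm, acc)"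
  shows "2 * real CARD('n) \<le> l1norm zp + l1norm zm"
    and "l1norm zp + l1norm zm \<le> 2 * real CARD('n) * exp (real t)"
    and "\<bar>ln (zp $ i)\<bar> \<le> ln (l1norm zp + l1norm zm)"
proof -
  have zp: "0 < zp $ i" "zm $ i = 1 / zp $ i" "\<bar>ln (zp $ i)\<bar> \<le> real t" for i
    using assms by (auto simp: gaelr_invariant_def)
  have W: "l1norm zp + l1norm zm = (\<Sum>i\<in>UNIV. zp $ i + 1 / zp $ i)"
    using zp(1,2) by (simp add: l1norm_of_pos sum.distrib)
  have two: "2 \<le> zp $ i + 1 / zp $ i" for i
    using plus_inverse_ge_2[OF zp(1)] by (simp add: inverse_eq_divide)
  have "(\<Sum>i\<in>(UNIV::'n set). (2::real)) \<le> (\<Sum>i\<in>UNIV. zp $ i + 1 / zp $ i)"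
    by (intro sum_mono two)
  then show "2 * real CARD('n) \<le> l1norm zp + l1norm zm"
    unfolding W by simp
  have exp: "zp $ i + 1 / zp $ i \<le> 2 * exp (real t)" for i
  proof -
    have "zp $ i = exp (ln (zp $ i))" "1 / zp $ i = exp (- ln (zp $ i))"
      using zp(1)[of i] by (simp_all add: exp_minus inverse_eq_divide)
    moreover have "exp (ln (zp $ i)) \<le> exp (real t)" "exp (- ln (zp $ i)) \<le> exp (real t)"
      using zp(3)[of i] by (simp_all add: abs_le_iff)
    ultimately have "zp $ i \<le> exp (real t)" "1 / zp $ i \<le> exp (real t)" by simp_all
    then show ?thesis by simp
  qed
  have "(\<Sum>i\<in>UNIV. zp $ i + 1 / zp $ i) \<le> (\<Sum>i\<in>(UNIV::'n set). 2 * exp (real t))"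
    by (intro sum_mono exp)
  then show "l1norm zp + l1norm zm \<le> 2 * real CARD('n) * exp (real t)"
    unfolding W by simp
  have "zp $ i + 1 / zp $ i \<le> l1norm zp + l1norm zm"
    unfolding W using two by (intro member_le_sum) (auto intro: order_trans[of 0 2])
  then have "zp $ i \<le> l1norm zp + l1norm zm" "1 / zp $ i \<le> l1norm zp + l1norm zm"
    using zp(1)[of i] divide_pos_pos[of 1 "zp $ i"] by linarith+
  moreover have "- ln (zp $ i) = ln (1 / zp $ i)" using zp(1)[of i] by (simp add: ln_div)
  ultimately show "\<bar>ln (zp $ i)\<bar> \<le> ln (l1norm zp + l1norm zm)"
    using zp(1)[of i] by (auto simp: abs_le_iff)
qed

section \<open>The potential argument\<close>

locale gaelr_analysis = bounded_regression D B
  for D :: "((real ^ 'n::finite) \<times> real) measure" and B :: real +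
  fixes q :: "'n pmf" and k :: nat and \<eta> :: real and ws :: "real ^ 'n" and V :: real
  assumes k_ge_1: "k \<ge> 1" and eta_pos: "\<eta> > 0"
    and AE_nth_eq_0_if_pmf_eq_0: "\<And>i. pmf q i = 0 \<Longrightarrow> AE p in D. fst p $ i = 0"
    and estimator_moment_le:
      "\<And>i. (\<integral>p. (fst p $ i)^2 / pmf q i \<partial>D) / real k + (\<integral>p. (fst p $ i)^2 \<partial>D) \<le> V"
    and l1norm_ws_le: "l1norm ws \<le> B"
begin

text \<open>Per-round cost of the variance terms: \<open>(\<parallel>w\<parallel>\<^sub>1 + B)\<^sup>2 \<le> 4B\<^sup>2\<close> times the coordinate weights,
  which sum to \<open>2B + \<parallel>ws\<parallel>\<^sub>1 \<le> 3B\<close>, times the estimator moment bound \<open>V\<close>.\<close>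
definition slack :: real where
  "slack = 12 * \<eta> * B^3 * V"

text \<open>The expectation of this potential does not increase from one round to the next.\<close>
definition potential :: "nat \<Rightarrow> 'n st3 \<Rightarrow> real" where
  "potential t st = (case st of (zp, zm, acc) \<Rightarrow>
      real t * risk D ((1 / real t) *\<^sub>R acc) - real t * risk D ws
      + (B / \<eta>) * ln (l1norm zp + l1norm zm)
      - (1 / \<eta>) * (\<Sum>i\<in>UNIV. ws $ i * ln (zp $ i)) - real t * slack)"

lemma potential_Pair: "potential t (zp, zm, acc) =
      real t * risk D ((1 / real t) *\<^sub>R acc) - real t * risk D ws
      + (B / \<eta>) * ln (l1norm zp + l1norm zm)
      - (1 / \<eta>) * (\<Sum>i\<in>UNIV. ws $ i * ln (zp $ i)) - real t * slack"
  by (simp add: potential_def)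

lemma borel_measurable_potential [measurable]: "potential t \<in> borel_measurable borel"
proof -
  have "potential t = (\<lambda>st. real t * risk D ((1 / real t) *\<^sub>R snd (snd st)) - real t * risk D ws
      + (B / \<eta>) * ln (l1norm (fst st) + l1norm (fst (snd st)))
      - (1 / \<eta>) * (\<Sum>i\<in>UNIV. ws $ i * ln (fst st $ i)) - real t * slack)"
    by (auto simp: potential_Pair)
  also have "\<dots> \<in> borel_measurable borel" by measurable
  finally show ?thesis .
qed

lemma risk_running_average_Suc_le:
  assumes "t = 0 \<longrightarrow> acc = 0"
  shows "real (Suc t) * risk D ((1 / real (Suc t)) *\<^sub>R (acc + w))
    \<le> real t * risk D ((1 / real t) *\<^sub>R acc) + risk D w"
proof (cases "t = 0")
  case False
  define a where "a = real t / real (Suc t)"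
  have a: "0 \<le> a" "a \<le> 1" unfolding a_def by auto
  have avg: "(1 / real (Suc t)) *\<^sub>R (acc + w) = a *\<^sub>R ((1 / real t) *\<^sub>R acc) + (1 - a) *\<^sub>R w"
    using False unfolding a_def by (simp add: field_simps scaleR_add_right algebra_simps)
  have "risk D ((1 / real (Suc t)) *\<^sub>R (acc + w))
      \<le> a * risk D ((1 / real t) *\<^sub>R acc) + (1 - a) * risk D w"
    unfolding avg by (rule risk_convex_comb[OF a])
  then have "real (Suc t) * risk D ((1 / real (Suc t)) *\<^sub>R (acc + w))
      \<le> real (Suc t) * (a * risk D ((1 / real t) *\<^sub>R acc) + (1 - a) * risk D w)"
    by (intro mult_left_mono) auto
  also have "\<dots> = (real (Suc t) * a) * risk D ((1 / real t) *\<^sub>R acc)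
      + (real (Suc t) * (1 - a)) * risk D w"
    by (simp add: algebra_simps)
  also have "real (Suc t) * a = real t"
    unfolding a_def by simp
  also have "real (Suc t) * (1 - a) = 1"
    unfolding a_def by (simp add: field_simps)
  finally show ?thesis by simp
qed (use assms in simp)

lemma potential_update_le:
  fixes zp zm acc xt :: "real ^ 'n" and ph :: real
  assumes pos: "\<And>i. zp $ i > 0" "\<And>i. zm $ i > 0" and acc0: "t = 0 \<longrightarrow> acc = 0"
  defines "w \<equiv> weight B zp zm" and "g \<equiv> ph *\<^sub>R xt"
    and "W \<equiv> l1norm zp + l1norm zm"
  shows "potential (Suc t) (gaelr_update B \<eta> zp zm acc xt ph)
    \<le> potential t (zp, zm, acc) + risk D w - risk D ws - g \<bullet> (w - ws)
       + \<eta> * (\<Sum>i\<in>UNIV. (g $ i)^2 * (2 * B * ((zp $ i + zm $ i) / W) + \<bar>ws $ i\<bar>)) - slack"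
proof -
  define gb where "gb = (\<chi> i. clip (g $ i) (1 / \<eta>))"
  define zp' where "zp' = (\<chi> i. zp $ i * exp (- \<eta> * gb $ i))"
  define zm' where "zm' = (\<chi> i. zm $ i * exp (\<eta> * gb $ i))"
  have update: "gaelr_update B \<eta> zp zm acc xt ph = (zp', zm', acc + w)"
    by (simp add: gaelr_update_def zp'_def zm'_def gb_def g_def w_def)
  have Wpos: "W > 0" unfolding W_def using pos by (simp add: l1norm_of_pos add_pos_pos sum_pos)
  have "ln (l1norm zp' + l1norm zm') - ln W \<le> - ((\<eta> / B) * (gb \<bullet> w))
         + \<eta>^2 * (\<Sum>i\<in>UNIV. ((zp $ i + zm $ i) / W) * (gb $ i)^2)"
    unfolding zp'_def zm'_def W_def w_def
    by (rule ln_potential_step_le[OF eta_pos B_pos pos])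
       (use abs_clip_le[of "1/\<eta>"] eta_pos in \<open>simp add: gb_def\<close>)
  from mult_left_mono[OF this, of "B / \<eta>"]
  have log_weight: "(B / \<eta>) * ln (l1norm zp' + l1norm zm') - (B / \<eta>) * ln W
      \<le> - (gb \<bullet> w) + \<eta> * B * (\<Sum>i\<in>UNIV. ((zp $ i + zm $ i) / W) * (gb $ i)^2)"
    using B_pos eta_pos by (simp add: right_diff_distrib power2_eq_square algebra_simps)
  have ln_zp': "ln (zp' $ i) = ln (zp $ i) - \<eta> * gb $ i" for i
    unfolding zp'_def using pos(1)[of i] by (simp add: ln_mult)
  have comparator: "- (1 / \<eta>) * (\<Sum>i\<in>UNIV. ws $ i * ln (zp' $ i)) =
      - (1 / \<eta>) * (\<Sum>i\<in>UNIV. ws $ i * ln (zp $ i)) + gb \<bullet> ws"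
    unfolding ln_zp' using eta_pos
    by (simp add: inner_vec_def algebra_simps sum_subtractf sum_distrib_left sum_divide_distrib sum_negf)
  have "- (gb $ i * (w - ws) $ i) + \<eta> * B * (((zp $ i + zm $ i) / W) * (gb $ i)^2)
      \<le> - (g $ i * (w - ws) $ i) + \<eta> * ((g $ i)^2 * (2 * B * ((zp $ i + zm $ i) / W) + \<bar>ws $ i\<bar>))"
    for i
    unfolding gb_def
    using clip_linear_quadratic_le[OF eta_pos, of B "(zp $ i + zm $ i) / W" "w $ i" "g $ i" "ws $ i"]
      abs_weight_nth_le[OF pos, of B i] B_pos pos[of i] Wpos
    by (simp add: w_def W_def)
  from sum_mono[OF this]
  have clipping: "- (gb \<bullet> (w - ws)) + \<eta> * B * (\<Sum>i\<in>UNIV. ((zp $ i + zm $ i) / W) * (gb $ i)^2)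
      \<le> - (g \<bullet> (w - ws)) + \<eta> * (\<Sum>i\<in>UNIV. (g $ i)^2 * (2 * B * ((zp $ i + zm $ i) / W) + \<bar>ws $ i\<bar>))"
    by (simp add: inner_vec_def sum.distrib sum_negf sum_distrib_left sum_subtractf)
  show ?thesis
    unfolding update potential_Pair W_def[symmetric]
    using log_weight comparator clipping risk_running_average_Suc_le[OF acc0, of w]
    by (simp add: inner_diff_right algebra_simps)
qed

lemma expectation_potential_step_le:
  fixes zp zm acc x :: "real ^ 'n" and y :: real
  assumes pos: "\<And>i. zp $ i > 0" "\<And>i. zm $ i > 0" and acc0: "t = 0 \<longrightarrow> acc = 0"
    and x: "linfnorm x \<le> 1" and y: "\<bar>y\<bar> \<le> B" and x_supp: "\<And>i. pmf q i = 0 \<Longrightarrow> x $ i = 0"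
  defines "w \<equiv> weight B zp zm"
    and "c \<equiv> \<lambda>i. 2 * B * ((zp $ i + zm $ i) / (l1norm zp + l1norm zm)) + \<bar>ws $ i\<bar>"
  shows "measure_pmf.expectation (gaelr_step B \<eta> q k (x, y) (zp, zm, acc)) (potential (Suc t))
    \<le> potential t (zp, zm, acc) + risk D w - risk D ws - ((w \<bullet> x - y) *\<^sub>R x) \<bullet> (w - ws)
       + \<eta> * (l1norm w + B)^2 * (\<Sum>i\<in>UNIV. ((x $ i)^2 / pmf q i / real k + (x $ i)^2) * c i)
       - slack"
proof -
  define K where "K = potential t (zp, zm, acc) + risk D w - risk D ws - slack"
  define Q where "Q = (\<lambda>xt :: real ^ 'n. \<Sum>i\<in>UNIV. (xt $ i)^2 * c i)"
  let ?X = "xtilde_pmf q k x" and ?F = "phi_pmf w x y"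
  have int_F: "integrable (measure_pmf ?F) f" for f :: "real \<Rightarrow> real"
    by (simp add: integrable_measure_pmf_finite finite_set_pmf_phi)
  have int_X: "integrable (measure_pmf ?X) f" for f :: "real ^ 'n \<Rightarrow> real"
    by (simp add: integrable_measure_pmf_finite finite_set_pmf_xtilde)
  have c_nonneg: "0 \<le> c i" for i
    unfolding c_def using B_pos by (intro coordinate_weight_nonneg pos) simp
  have path: "potential (Suc t) (gaelr_update B \<eta> zp zm acc xt ph)
      \<le> K - ph * (xt \<bullet> (w - ws)) + \<eta> * (ph^2 * Q xt)" for xt ph
    using potential_update_le[OF pos acc0, of xt ph]
    by (simp add: K_def Q_def w_def c_def sum_distrib_left power_mult_distrib mult_ac)
  have "measure_pmf.expectation (gaelr_step B \<eta> q k (x, y) (zp, zm, acc)) (potential (Suc t))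
      = measure_pmf.expectation ?X (\<lambda>xt. measure_pmf.expectation ?F
          (\<lambda>ph. potential (Suc t) (gaelr_update B \<eta> zp zm acc xt ph)))"
    unfolding gaelr_step_eq w_def
    by (simp add: expectation_bind_pmf_finite finite_set_pmf_xtilde finite_set_pmf_phi)
  also have "\<dots> \<le> measure_pmf.expectation ?X (\<lambda>xt. measure_pmf.expectation ?F
      (\<lambda>ph. K - ph * (xt \<bullet> (w - ws)) + \<eta> * (ph^2 * Q xt)))"
    by (intro integral_mono int_X int_F path)
  also have "\<dots> = measure_pmf.expectation ?X (\<lambda>xt. K - (w \<bullet> x - y) * (xt \<bullet> (w - ws))
        + \<eta> * (measure_pmf.expectation ?F (\<lambda>ph. ph^2) * Q xt))"
    by (simp add: int_F measure_pmf.prob_space expectation_phi_pmf_unbiased[symmetric])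
  also have "\<dots> = K - (w \<bullet> x - y) * (x \<bullet> (w - ws))
        + \<eta> * (measure_pmf.expectation ?F (\<lambda>ph. ph^2) * measure_pmf.expectation ?X Q)"
    using expectation_xtilde_inner[OF k_ge_1 x_supp, where v = "w - ws"]
    by (simp add: int_X measure_pmf.prob_space)
  also have "\<dots> \<le> K - (w \<bullet> x - y) * (x \<bullet> (w - ws))
        + \<eta> * ((l1norm w + B)^2 * (\<Sum>i\<in>UNIV. ((x $ i)^2 / pmf q i / real k + (x $ i)^2) * c i))"
    using expectation_phi_pmf_sq_le[OF x y, of w]
      expectation_xtilde_weighted_sq_le[where q = q and x = x and c = c, OF k_ge_1 c_nonneg] eta_pos
    by (intro add_left_mono mult_left_mono mult_mono)
       (auto simp: Q_def integral_nonneg_AE sum_nonneg c_nonneg)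
  finally show ?thesis by (simp add: K_def algebra_simps)
qed

definition potential_bound :: "nat \<Rightarrow> real" where
  "potential_bound t = real t * (2 * B^2) + real t * \<bar>risk D ws\<bar>
    + (B / \<eta>) * (ln (2 * real CARD('n)) + real t) + (1 / \<eta>) * l1norm ws * real t
    + real t * \<bar>slack\<bar>"

lemma risk_average_le:
  assumes "gaelr_invariant B t (zp, zm, acc)"
  shows "0 \<le> real t * risk D ((1 / real t) *\<^sub>R acc)"
    and "real t * risk D ((1 / real t) *\<^sub>R acc) \<le> real t * (2 * B^2)"
proof -
  show "0 \<le> real t * risk D ((1 / real t) *\<^sub>R acc)" by (simp add: risk_nonneg)
  show "real t * risk D ((1 / real t) *\<^sub>R acc) \<le> real t * (2 * B^2)"
  proof (cases "t = 0")
    case False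
    with assms have "l1norm ((1 / real t) *\<^sub>R acc) \<le> B"
      by (simp add: gaelr_invariant_def l1norm_scaleR field_simps)
    then show ?thesis by (intro mult_left_mono risk_le_if_l1norm_le) auto
  qed simp
qed

lemma abs_potential_le:
  assumes "gaelr_invariant B t st"
  shows "\<bar>potential t st\<bar> \<le> potential_bound t"
proof -
  obtain zp zm acc where st: "st = (zp, zm, acc)" by (cases st) auto
  let ?W = "l1norm zp + l1norm zm"
  have zp: "0 < zp $ i" "\<bar>ln (zp $ i)\<bar> \<le> real t" for i
    using assms by (auto simp: gaelr_invariant_def st)
  note W = gaelr_invariant_total_weight[OF assms[unfolded st]]
  have "1 \<le> real CARD('n)" by simp
  with W(1) have "1 \<le> ?W" by linarith
  then have ln_nonneg: "0 \<le> ln ?W" by simp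
  have "ln ?W \<le> ln (2 * real CARD('n) * exp (real t))"
    using W(2) \<open>1 \<le> ?W\<close> by simp
  then have ln_le: "ln ?W \<le> ln (2 * real CARD('n)) + real t" by (simp add: ln_mult)
  have B_eta: "0 \<le> B / \<eta>" using B_pos eta_pos by simp
  have "0 \<le> (B / \<eta>) * ln ?W" by (rule mult_nonneg_nonneg[OF B_eta ln_nonneg])
  moreover have "(B / \<eta>) * ln ?W \<le> (B / \<eta>) * (ln (2 * real CARD('n)) + real t)"
    by (rule mult_left_mono[OF ln_le B_eta])
  ultimately have "\<bar>(B / \<eta>) * ln ?W\<bar> \<le> (B / \<eta>) * (ln (2 * real CARD('n)) + real t)"
    by (simp add: abs_le_iff)
  moreover have "\<bar>(1 / \<eta>) * (\<Sum>i\<in>UNIV. ws $ i * ln (zp $ i))\<bar> \<le> (1 / \<eta>) * l1norm ws * real t"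
  proof -
    have "\<bar>\<Sum>i\<in>UNIV. ws $ i * ln (zp $ i)\<bar> \<le> (\<Sum>i\<in>UNIV. \<bar>ws $ i\<bar> * real t)"
      by (rule order_trans[OF sum_abs], intro sum_mono) (simp add: abs_mult zp(2) mult_left_mono)
    then show ?thesis
      using eta_pos by (simp add: abs_mult l1norm_def sum_distrib_right[symmetric] divide_right_mono)
  qed
  moreover note risk_average_le[OF assms[unfolded st]]
  moreover have "\<bar>real t * risk D ws\<bar> = real t * \<bar>risk D ws\<bar>" "\<bar>real t * slack\<bar> = real t * \<bar>slack\<bar>"
    by (simp_all add: abs_mult)
  ultimately show ?thesis unfolding st potential_Pair potential_bound_def by linarith
qed

lemma potential_init: "potential 0 ((\<chi> i. 1), (\<chi> i. 1), 0) = (B / \<eta>) * ln (2 * real CARD('n))"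
  by (simp add: potential_Pair l1norm_def)

text \<open>The comparator term is dominated by the log-weight term because \<open>\<parallel>ws\<parallel>\<^sub>1 \<le> B\<close>.\<close>
lemma risk_average_le_potential:
  assumes "gaelr_invariant B t st"
  shows "real t * risk D ((1 / real t) *\<^sub>R snd (snd st))
    \<le> potential t st + real t * risk D ws + real t * slack"
proof -
  obtain zp zm acc where st: "st = (zp, zm, acc)" by (cases st) auto
  let ?W = "l1norm zp + l1norm zm"
  note W = gaelr_invariant_total_weight[OF assms[unfolded st]]
  have "1 \<le> real CARD('n)" by simp
  with W(1) have "1 \<le> ?W" by linarith
  then have "0 \<le> ln ?W" by simp
  have "(\<Sum>i\<in>UNIV. ws $ i * ln (zp $ i)) \<le> (\<Sum>i\<in>UNIV. \<bar>ws $ i\<bar> * ln ?W)"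
  proof (rule sum_mono)
    fix i
    have "ws $ i * ln (zp $ i) \<le> \<bar>ws $ i\<bar> * \<bar>ln (zp $ i)\<bar>" by (metis abs_ge_self abs_mult)
    also have "\<dots> \<le> \<bar>ws $ i\<bar> * ln ?W" by (intro mult_left_mono W(3)) auto
    finally show "ws $ i * ln (zp $ i) \<le> \<bar>ws $ i\<bar> * ln ?W" .
  qed
  also have "\<dots> = l1norm ws * ln ?W" by (simp add: l1norm_def sum_distrib_right)
  also have "\<dots> \<le> B * ln ?W"
    using l1norm_ws_le \<open>0 \<le> ln ?W\<close> by (intro mult_right_mono)
  finally have "(1 / \<eta>) * (\<Sum>i\<in>UNIV. ws $ i * ln (zp $ i)) \<le> (B / \<eta>) * ln ?W"
    using eta_pos by (simp add: divide_right_mono)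
  then show ?thesis unfolding st potential_Pair by simp
qed

definition estimator_moment :: "'n \<Rightarrow> (real ^ 'n) \<times> real \<Rightarrow> real" where
  "estimator_moment i p = (fst p $ i)^2 / pmf q i / real k + (fst p $ i)^2"

lemma integrable_estimator_moment: "integrable D (estimator_moment i)"
proof (rule integrable_const_bound[where B="1 / pmf q i / real k + 1"])
  show "AE p in D. norm (estimator_moment i p) \<le> 1 / pmf q i / real k + 1"
    using AE_nth_sq_le_1[of i]
  proof eventually_elim
    case (elim p)
    then have "(fst p $ i)^2 / pmf q i / real k \<le> 1 / pmf q i / real k"
      by (intro divide_right_mono) auto
    with elim show ?case by (simp add: estimator_moment_def)
  qed
qed (unfold estimator_moment_def, measurable)

lemma integral_estimator_moment_le: "(\<integral>p. estimator_moment i p \<partial>D) \<le> V"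
proof -
  have "integrable D (\<lambda>p. real k * (estimator_moment i p - (fst p $ i)^2))"
    using integrable_estimator_moment integrable_nth_sq by simp
  moreover have "real k * (estimator_moment i p - (fst p $ i)^2) = (fst p $ i)^2 / pmf q i" for p
    unfolding estimator_moment_def using k_ge_1 by simp
  ultimately have "integrable D (\<lambda>p. (fst p $ i)^2 / pmf q i)" by simp
  then show ?thesis
    using estimator_moment_le[of i] integrable_nth_sq[of i] by (simp add: estimator_moment_def)
qed

lemma V_nonneg: "0 \<le> V"
proof -
  fix i
  have "0 \<le> (\<integral>p. estimator_moment i p \<partial>D)"
    by (intro integral_nonneg_AE) (simp add: estimator_moment_def)
  then show ?thesis using integral_estimator_moment_le[of i] by linarith
qed

lemma integrable_expectation_potential_step:
  assumes "gaelr_invariant B t st"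
  shows "integrable D (\<lambda>p. measure_pmf.expectation (gaelr_step B \<eta> q k p st) (potential (Suc t)))"
proof (rule integrable_const_bound[where B="potential_bound (Suc t)"])
  show "AE p in D. norm (measure_pmf.expectation (gaelr_step B \<eta> q k p st) (potential (Suc t)))
      \<le> potential_bound (Suc t)"
    using gaelr_invariant_step[OF assms eta_pos] B_pos
    by (auto intro!: abs_expectation_pmf_le abs_potential_le finite_set_pmf_gaelr_step)
  have "(\<lambda>p. measure_pmf.expectation (gaelr_step B \<eta> q k (id p) st) (potential (Suc t)))
      \<in> borel_measurable D"
    by (rule borel_measurable_expectation_gaelr_step) (simp_all add: measurable_D_eq)
  then show "(\<lambda>p. measure_pmf.expectation (gaelr_step B \<eta> q k p st) (potential (Suc t)))
      \<in> borel_measurable D" by simp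
qed

lemma AE_expectation_potential_step_le:
  assumes inv: "gaelr_invariant B t (zp, zm, acc)"
  defines "w \<equiv> weight B zp zm"
    and "c \<equiv> \<lambda>i. 2 * B * ((zp $ i + zm $ i) / (l1norm zp + l1norm zm)) + \<bar>ws $ i\<bar>"
  shows "AE p in D. measure_pmf.expectation (gaelr_step B \<eta> q k p (zp, zm, acc)) (potential (Suc t))
    \<le> potential t (zp, zm, acc) + (risk D w - sq_loss w (fst p) (snd p))
      - (risk D ws - sq_loss ws (fst p) (snd p))
      + \<eta> * (4 * B^2) * (\<Sum>i\<in>UNIV. estimator_moment i p * c i) - slack"
proof -
  have zp: "0 < zp $ i" "0 < zm $ i" "t = 0 \<longrightarrow> acc = 0" for i
    using inv by (auto simp: gaelr_invariant_def)
  have "(l1norm w + B)^2 \<le> 4 * B^2"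
    using l1norm_weight_le[of zp zm B] zp B_pos l1norm_nonneg[of w]
      power_mono[of "l1norm w + B" "B + B" 2]
    by (simp add: w_def power2_eq_square)
  moreover have "0 \<le> c i" for i
    unfolding c_def using B_pos zp by (intro coordinate_weight_nonneg) auto
  ultimately have moments: "\<eta> * (l1norm w + B)^2 * (\<Sum>i\<in>UNIV. estimator_moment i p * c i)
      \<le> \<eta> * (4 * B^2) * (\<Sum>i\<in>UNIV. estimator_moment i p * c i)" for p
    using eta_pos
    by (intro mult_right_mono mult_left_mono sum_nonneg mult_nonneg_nonneg)
       (auto simp: estimator_moment_def)
  have "AE p in D. \<forall>i. pmf q i = 0 \<longrightarrow> fst p $ i = 0"
    unfolding AE_all_countable by (auto intro: AE_nth_eq_0_if_pmf_eq_0)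
  with bounded_examples show ?thesis
  proof eventually_elim
    case (elim p)
    obtain x y where p: "p = (x, y)" by (cases p)
    show ?case
      using expectation_potential_step_le[of zp zm t acc x y] elim zp
        sq_loss_diff_le_gradient[of w x y ws] moments[of p]
      by (simp add: p w_def c_def estimator_moment_def)
  qed
qed

lemma integral_expectation_potential_step_le:
  assumes inv: "gaelr_invariant B t st"
  shows "(\<integral>p. measure_pmf.expectation (gaelr_step B \<eta> q k p st) (potential (Suc t)) \<partial>D)
    \<le> potential t st"
proof -
  obtain zp zm acc where st: "st = (zp, zm, acc)" by (cases st) auto
  have zp: "0 < zp $ i" "0 < zm $ i" for i
    using inv by (auto simp: gaelr_invariant_def st)
  define w where "w = weight B zp zm"
  define c where "c i = 2 * B * ((zp $ i + zm $ i) / (l1norm zp + l1norm zm)) + \<bar>ws $ i\<bar>" for i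
  have c_nonneg: "0 \<le> c i" for i
    unfolding c_def using B_pos zp by (intro coordinate_weight_nonneg) auto
  have sum_c: "(\<Sum>i\<in>UNIV. c i) \<le> 3 * B"
    using sum_coordinate_weight[OF zp, of B ws] l1norm_ws_le by (simp add: c_def)
  have "(\<integral>p. measure_pmf.expectation (gaelr_step B \<eta> q k p st) (potential (Suc t)) \<partial>D)
      \<le> (\<integral>p. potential t st + (risk D w - sq_loss w (fst p) (snd p))
        - (risk D ws - sq_loss ws (fst p) (snd p))
        + \<eta> * (4 * B^2) * (\<Sum>i\<in>UNIV. estimator_moment i p * c i) - slack \<partial>D)"
    using AE_expectation_potential_step_le[OF inv[unfolded st]]
    by (intro integral_mono_AE integrable_expectation_potential_step[OF inv])
       (simp_all add: st w_def c_def integrable_sq_loss integrable_estimator_moment)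
  also have "\<dots> = potential t st + \<eta> * (4 * B^2) * (\<Sum>i\<in>UNIV. (\<integral>p. estimator_moment i p \<partial>D) * c i)
      - slack"
    by (simp add: prob_space risk_def[symmetric] integrable_sq_loss integrable_estimator_moment)
  also have "\<dots> \<le> potential t st + \<eta> * (4 * B^2) * (V * (3 * B)) - slack"
  proof -
    have "(\<Sum>i\<in>UNIV. (\<integral>p. estimator_moment i p \<partial>D) * c i) \<le> (\<Sum>i\<in>UNIV. V * c i)"
      by (intro sum_mono mult_right_mono integral_estimator_moment_le c_nonneg)
    also have "\<dots> \<le> V * (3 * B)"
      using sum_c V_nonneg by (simp add: sum_distrib_left[symmetric] mult_left_mono)
    finally show ?thesis using eta_pos by (intro diff_right_mono add_left_mono mult_left_mono) auto
  qed
  also have "\<dots> = potential t st"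
    by (simp add: slack_def power2_eq_square power3_eq_cube)
  finally show ?thesis .
qed

abbreviation run :: "(nat \<Rightarrow> (real ^ 'n) \<times> real) \<Rightarrow> nat \<Rightarrow> 'n st3 pmf" where
  "run S t \<equiv> gaelr_run B \<eta> q k S t"

lemma invariant_run: "st \<in> set_pmf (run S t) \<Longrightarrow> gaelr_invariant B t st"
  by (rule gaelr_invariant_run[OF eta_pos]) (use B_pos in auto)

lemma abs_expectation_potential_run_le:
  "\<bar>measure_pmf.expectation (run S t) (potential t)\<bar> \<le> potential_bound t"
  by (intro abs_expectation_pmf_le finite_set_pmf_gaelr_run abs_potential_le invariant_run)

lemma abs_expectation_run_step_le:
  "\<bar>measure_pmf.expectation (run S t)
      (\<lambda>st. measure_pmf.expectation (gaelr_step B \<eta> q k y st) (potential (Suc t)))\<bar>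
    \<le> potential_bound (Suc t)"
  using gaelr_invariant_step[OF invariant_run eta_pos] B_pos
  by (intro abs_expectation_pmf_le finite_set_pmf_gaelr_run finite_set_pmf_gaelr_step
      abs_potential_le) auto

lemma prob_space_PiM_D: "prob_space (PiM I (\<lambda>_. D))"
  by (rule prob_space_PiM) (rule prob_space_D)

lemma borel_measurable_component_PiM: "s \<in> I \<Longrightarrow> (\<lambda>S. S s) \<in> borel_measurable (PiM I (\<lambda>_. D))"
  using measurable_component_singleton[of s I "\<lambda>_. D"] by (simp add: measurable_into_D_eq)

lemma borel_measurable_expectation_run:
  fixes f :: "_ \<Rightarrow> 'n st3 \<Rightarrow> real"
  assumes "\<And>s. s < t \<Longrightarrow> s \<in> I"
    and "case_prod f \<in> borel_measurable (PiM I (\<lambda>_. D) \<Otimes>\<^sub>M (borel :: 'n st3 measure))"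
  shows "(\<lambda>S. measure_pmf.expectation (run S t) (f S)) \<in> borel_measurable (PiM I (\<lambda>_. D))"
proof -
  have "(\<lambda>S. measure_pmf.expectation (gaelr_run B \<eta> q k (id S) t) (f S))
      \<in> borel_measurable (PiM I (\<lambda>_. D))"
  proof (rule borel_measurable_expectation_gaelr_run)
    show "(\<lambda>S. id S s) \<in> borel_measurable (PiM I (\<lambda>_. D))" if "s < t" for s
      using borel_measurable_component_PiM[OF assms(1)[OF that]] by simp
  qed (rule assms(2))
  then show ?thesis by simp
qed

lemma integrable_expectation_potential_run:
  assumes "\<And>s. s < t \<Longrightarrow> s \<in> I"
  shows "integrable (PiM I (\<lambda>_. D)) (\<lambda>S. measure_pmf.expectation (run S t) (potential t))"
proof -
  interpret PiM: prob_space "PiM I (\<lambda>_. D)" by (rule prob_space_PiM_D)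
  show ?thesis
  proof (rule PiM.integrable_const_bound[where B = "potential_bound t"])
    show "(\<lambda>S. measure_pmf.expectation (run S t) (potential t)) \<in> borel_measurable (PiM I (\<lambda>_. D))"
      by (rule borel_measurable_expectation_run[OF assms]) measurable
  qed (simp add: abs_expectation_potential_run_le)
qed

lemma borel_measurable_expectation_run_step:
  assumes "\<And>s. s < t \<Longrightarrow> s \<in> I"
  shows "(\<lambda>(S, y). measure_pmf.expectation (run S t)
      (\<lambda>st. measure_pmf.expectation (gaelr_step B \<eta> q k y st) (potential (Suc t))))
    \<in> borel_measurable (PiM I (\<lambda>_. D) \<Otimes>\<^sub>M D)"
proof -
  let ?N = "PiM I (\<lambda>_. D) \<Otimes>\<^sub>M D"
  have "(\<lambda>z. snd (fst z)) \<in> borel_measurable (?N \<Otimes>\<^sub>M (borel :: 'n st3 measure))"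
    unfolding measurable_into_D_eq[symmetric] by measurable
  then have "(\<lambda>(z, st). measure_pmf.expectation (gaelr_step B \<eta> q k (snd z) st) (potential (Suc t)))
      \<in> borel_measurable (?N \<Otimes>\<^sub>M borel)"
    using borel_measurable_expectation_gaelr_step[where X = "\<lambda>z. snd (fst z)" and ST = snd
        and N = "?N \<Otimes>\<^sub>M borel" and f = "\<lambda>_. potential (Suc t)" and B = B and \<eta> = \<eta>
        and q = q and k = k]
    by (simp add: case_prod_beta')
  moreover have "(\<lambda>z. fst z s) \<in> borel_measurable ?N" if "s < t" for s
    using measurable_compose[OF measurable_fst[of "PiM I (\<lambda>_. D)" D]
        borel_measurable_component_PiM[OF assms[OF that]]]
    by simp
  ultimately have "(\<lambda>z. measure_pmf.expectation (run (fst z) t)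
      (\<lambda>st. measure_pmf.expectation (gaelr_step B \<eta> q k (snd z) st) (potential (Suc t))))
      \<in> borel_measurable ?N"
    by (intro borel_measurable_expectation_gaelr_run) (simp_all add: case_prod_beta')
  then show ?thesis by (simp add: case_prod_beta')
qed

lemma integrable_integral_expectation_run_step:
  assumes "\<And>s. s < t \<Longrightarrow> s \<in> I"
  shows "integrable (PiM I (\<lambda>_. D)) (\<lambda>S. \<integral>y. measure_pmf.expectation (run S t)
      (\<lambda>st. measure_pmf.expectation (gaelr_step B \<eta> q k y st) (potential (Suc t))) \<partial>D)"
proof -
  interpret PiM: prob_space "PiM I (\<lambda>_. D)" by (rule prob_space_PiM_D)
  note H = borel_measurable_expectation_run_step[OF assms]
  show ?thesis
  proof (rule PiM.integrable_const_bound[where B = "potential_bound (Suc t)"])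
  show "(\<lambda>S. \<integral>y. measure_pmf.expectation (run S t)
      (\<lambda>st. measure_pmf.expectation (gaelr_step B \<eta> q k y st) (potential (Suc t))) \<partial>D)
    \<in> borel_measurable (PiM I (\<lambda>_. D))"
    using sigma_finite_measure.borel_measurable_lebesgue_integral[OF
        prob_space_imp_sigma_finite[OF prob_space_D] H]
    by simp
  show "AE S in PiM I (\<lambda>_. D). norm (\<integral>y. measure_pmf.expectation (run S t)
      (\<lambda>st. measure_pmf.expectation (gaelr_step B \<eta> q k y st) (potential (Suc t))) \<partial>D)
    \<le> potential_bound (Suc t)"
  proof (rule AE_I2)
    fix S assume "S \<in> space (PiM I (\<lambda>_. D))"
    from measurable_Pair2[OF H this]
    show "norm (\<integral>y. measure_pmf.expectation (run S t)
      (\<lambda>st. measure_pmf.expectation (gaelr_step B \<eta> q k y st) (potential (Suc t))) \<partial>D)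
      \<le> potential_bound (Suc t)"
      by (simp add: abs_integral_le_const abs_expectation_run_step_le)
  qed
  qed
qed

lemma integral_expectation_run_step_le:
  "(\<integral>y. measure_pmf.expectation (run S t)
      (\<lambda>st. measure_pmf.expectation (gaelr_step B \<eta> q k y st) (potential (Suc t))) \<partial>D)
    \<le> measure_pmf.expectation (run S t) (potential t)"
proof -
  let ?A = "set_pmf (run S t)"
  let ?h = "\<lambda>y st. measure_pmf.expectation (gaelr_step B \<eta> q k y st) (potential (Suc t))"
  have fin: "finite ?A" by (rule finite_set_pmf_gaelr_run)
  have "(\<integral>y. measure_pmf.expectation (run S t) (?h y) \<partial>D)
      = (\<integral>y. (\<Sum>st\<in>?A. ?h y st * pmf (run S t) st) \<partial>D)"
    by (intro Bochner_Integration.integral_cong refl integral_measure_pmf_real fin) auto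
  also have "\<dots> = (\<Sum>st\<in>?A. (\<integral>y. ?h y st \<partial>D) * pmf (run S t) st)"
    by (simp add: integrable_expectation_potential_step invariant_run)
  also have "\<dots> \<le> (\<Sum>st\<in>?A. potential t st * pmf (run S t) st)"
    by (intro sum_mono mult_right_mono integral_expectation_potential_step_le invariant_run) auto
  also have "\<dots> = measure_pmf.expectation (run S t) (potential t)"
    by (rule integral_measure_pmf_real[symmetric]) (auto simp: fin)
  finally show ?thesis .
qed

text \<open>Integrating out the \<open>t\<close>-th example first (Fubini on the product of the i.i.d. examples)
  turns the one-step bound into a supermartingale property of the expected potential.\<close>
lemma integral_expectation_potential_run_le:
  assumes "t \<le> m"
  shows "(\<integral>S. measure_pmf.expectation (run S t) (potential t) \<partial>PiM {0..<m} (\<lambda>_. D))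
    \<le> potential 0 ((\<chi> i. 1), (\<chi> i. 1), 0)"
  using assms
proof (induction t)
  case 0
  then show ?case by (simp add: prob_space.prob_space[OF prob_space_PiM_D])
next
  case (Suc t)
  interpret product_prob_space "\<lambda>_::nat. D" UNIV
    by (simp add: product_prob_space_def product_prob_space_axioms_def product_sigma_finite_def
        prob_space_D prob_space_imp_sigma_finite)
  define I where "I = {0..<m} - {t}"
  have I: "insert t I = {0..<m}" "finite I" "t \<notin> I" "\<And>s. s < t \<Longrightarrow> s \<in> I"
    using Suc.prems by (auto simp: I_def)
  have prefix: "run (S(t := y)) t = run S t" for S y by (rule gaelr_run_cong_prefix) auto
  have "(\<integral>S. measure_pmf.expectation (run S (Suc t)) (potential (Suc t)) \<partial>PiM {0..<m} (\<lambda>_. D))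
      = (\<integral>S. (\<integral>y. measure_pmf.expectation (run (S(t := y)) (Suc t)) (potential (Suc t)) \<partial>D)
          \<partial>PiM I (\<lambda>_. D))"
    unfolding I(1)[symmetric]
    by (rule product_integral_insert[OF I(2,3)]) (rule integrable_expectation_potential_run, use I Suc.prems in auto)
  also have "\<dots> = (\<integral>S. (\<integral>y. measure_pmf.expectation (run S t)
      (\<lambda>st. measure_pmf.expectation (gaelr_step B \<eta> q k y st) (potential (Suc t))) \<partial>D)
      \<partial>PiM I (\<lambda>_. D))"
    by (simp only: expectation_gaelr_run_Suc prefix fun_upd_same)
  also have "\<dots> \<le> (\<integral>S. measure_pmf.expectation (run S t) (potential t) \<partial>PiM I (\<lambda>_. D))"
    by (intro integral_mono integral_expectation_run_step_le
        integrable_integral_expectation_run_step integrable_expectation_potential_run I(4))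
  also have "\<dots> = (\<integral>S. (\<integral>y. measure_pmf.expectation (run (S(t := y)) t) (potential t) \<partial>D)
      \<partial>PiM I (\<lambda>_. D))"
    by (simp add: prefix prob_space.prob_space[OF prob_space_D])
  also have "\<dots> = (\<integral>S. measure_pmf.expectation (run S t) (potential t) \<partial>PiM {0..<m} (\<lambda>_. D))"
    unfolding I(1)[symmetric]
    by (rule product_integral_insert[OF I(2,3), symmetric])
       (rule integrable_expectation_potential_run, use I Suc.prems in auto)
  also have "\<dots> \<le> potential 0 ((\<chi> i. 1), (\<chi> i. 1), 0)" using Suc by simp
  finally show ?case .
qed

lemma expectation_GAELR_risk_le_potential:
  assumes "m \<ge> 1"
  shows "measure_pmf.expectation (GAELR B \<eta> q k m S) (risk D)
    \<le> measure_pmf.expectation (run S m) (potential m) / real m + risk D ws + slack"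
proof -
  have "measure_pmf.expectation (GAELR B \<eta> q k m S) (risk D)
      = measure_pmf.expectation (run S m) (\<lambda>st. risk D ((1 / real m) *\<^sub>R snd (snd st)))"
    by (simp add: GAELR_def case_prod_beta')
  also have "\<dots> \<le> measure_pmf.expectation (run S m) (\<lambda>st. potential m st / real m + risk D ws + slack)"
  proof (intro integral_mono_AE integrable_measure_pmf_finite finite_set_pmf_gaelr_run)
    show "AE st in run S m. risk D ((1 / real m) *\<^sub>R snd (snd st))
        \<le> potential m st / real m + risk D ws + slack"
      unfolding AE_measure_pmf_iff
      using risk_average_le_potential[OF invariant_run] assms by (auto simp: field_simps)
  qed
  also have "\<dots> = measure_pmf.expectation (run S m) (potential m) / real m + risk D ws + slack"
    by (simp add: integrable_measure_pmf_finite[OF finite_set_pmf_gaelr_run] measure_pmf.prob_space)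
  finally show ?thesis .
qed

lemma integral_expectation_GAELR_risk_le:
  assumes "m \<ge> 1"
  shows "(\<integral>S. measure_pmf.expectation (GAELR B \<eta> q k m S) (risk D) \<partial>PiM {0..<m} (\<lambda>_. D))
    \<le> risk D ws + slack + (B / \<eta>) * ln (2 * real CARD('n)) / real m"
proof -
  interpret PiM: prob_space "PiM {0..<m} (\<lambda>_. D)" by (rule prob_space_PiM_D)
  let ?g = "\<lambda>S. measure_pmf.expectation (run S m) (\<lambda>st. risk D ((1 / real m) *\<^sub>R snd (snd st)))"
  have GAELR: "measure_pmf.expectation (GAELR B \<eta> q k m S) (risk D) = ?g S" for S
    by (simp add: GAELR_def case_prod_beta')
  have int_g: "integrable (PiM {0..<m} (\<lambda>_. D)) ?g"
  proof (rule PiM.integrable_const_bound[where B = "2 * B^2"])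
    show "?g \<in> borel_measurable (PiM {0..<m} (\<lambda>_. D))"
      by (rule borel_measurable_expectation_run) measurable
    have "\<bar>risk D ((1 / real m) *\<^sub>R snd (snd st))\<bar> \<le> 2 * B^2" if "st \<in> set_pmf (run S m)" for S st
      using risk_average_le[of m "fst st" "fst (snd st)" "snd (snd st)"] invariant_run[OF that]
        risk_nonneg assms
      by (simp add: abs_of_nonneg)
    then show "AE S in PiM {0..<m} (\<lambda>_. D). norm (?g S) \<le> 2 * B^2"
      by (auto intro!: abs_expectation_pmf_le finite_set_pmf_gaelr_run)
  qed
  have int_potential: "integrable (PiM {0..<m} (\<lambda>_. D))
      (\<lambda>S. measure_pmf.expectation (run S m) (potential m))"
    by (rule integrable_expectation_potential_run) simp
  have "(\<integral>S. ?g S \<partial>PiM {0..<m} (\<lambda>_. D))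
      \<le> (\<integral>S. measure_pmf.expectation (run S m) (potential m) / real m + risk D ws + slack
          \<partial>PiM {0..<m} (\<lambda>_. D))"
    using expectation_GAELR_risk_le_potential[OF assms] int_potential
    by (intro integral_mono int_g) (simp_all add: GAELR)
  also have "\<dots> = (\<integral>S. measure_pmf.expectation (run S m) (potential m) \<partial>PiM {0..<m} (\<lambda>_. D))
      / real m + risk D ws + slack"
    using int_potential by (simp add: PiM.prob_space)
  also have "\<dots> \<le> (B / \<eta>) * ln (2 * real CARD('n)) / real m + risk D ws + slack"
    using integral_expectation_potential_run_le[of m m]
    by (intro add_right_mono divide_right_mono) (simp_all add: potential_init)
  finally show ?thesis by (simp add: GAELR)
qed

end

section \<open>Data-dependent sampling\<close>

context bounded_regression
begin

lemma pmf_ddaelr_q: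
  assumes "l1norm (second_moments D) > 0"
  shows "pmf (ddaelr_q D) i = second_moments D $ i / l1norm (second_moments D)"
  unfolding ddaelr_q_def
proof (rule pmf_embed_pmf_finite)
  show "0 \<le> second_moments D $ j / l1norm (second_moments D)" for j
    using second_moments_nonneg assms by simp
  show "(\<Sum>j\<in>UNIV. second_moments D $ j / l1norm (second_moments D)) = 1"
    using assms by (simp add: sum_divide_distrib[symmetric] l1norm_second_moments[symmetric])
qed

lemma second_moments_le_l1norm: "second_moments D $ i \<le> l1norm (second_moments D)"
  unfolding l1norm_second_moments by (rule member_le_sum) (auto simp: second_moments_nonneg)

lemma AE_nth_eq_0_if_pmf_ddaelr_q_eq_0:
  assumes "pmf (ddaelr_q D) i = 0"
  shows "AE p in D. fst p $ i = 0"
proof (rule AE_nth_eq_0_if_second_moments_eq_0, rule ccontr)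
  assume "second_moments D $ i \<noteq> 0"
  then have "0 < second_moments D $ i" using second_moments_nonneg[of i] by simp
  then show False
    using assms pmf_ddaelr_q[of i] second_moments_le_l1norm[of i] by simp
qed

text \<open>Sampling coordinates proportionally to their second moments makes each coordinate's
  importance-weighted second moment equal to \<open>\<parallel>E[x\<^sup>2]\<parallel>\<^sub>1\<close>.\<close>
lemma ddaelr_estimator_moment_le:
  assumes "k \<ge> 1"
  shows "(\<integral>p. (fst p $ i)^2 / pmf (ddaelr_q D) i \<partial>D) / real k + (\<integral>p. (fst p $ i)^2 \<partial>D)
     \<le> l1norm (second_moments D) / real k + 1"
proof -
  have "(\<integral>p. (fst p $ i)^2 / pmf (ddaelr_q D) i \<partial>D) \<le> l1norm (second_moments D)"
  proof (cases "second_moments D $ i = 0")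
    case True
    then show ?thesis
      using l1norm_nonneg[of "second_moments D"] by (simp add: second_moments_def)
  next
    case False
    then have "0 < second_moments D $ i" using second_moments_nonneg[of i] by simp
    then show ?thesis
      using second_moments_le_l1norm[of i]
      by (simp add: pmf_ddaelr_q second_moments_def)
  qed
  then have "(\<integral>p. (fst p $ i)^2 / pmf (ddaelr_q D) i \<partial>D) / real k
      \<le> l1norm (second_moments D) / real k"
    by (rule divide_right_mono) simp
  then show ?thesis using second_moments_le_1[of i] by (simp add: second_moments_def)
qed

end

lemma step_size_tradeoff:
  fixes B L m V :: real
  assumes B: "B > 0" and L: "L > 0" and m: "m > 0" and V: "V \<ge> 1"
    and eta: "\<eta> = 1 / (2 * B) * sqrt (L / (5 * m * V))"
  shows "12 * \<eta> * B^3 * V + (B / \<eta>) * L / m \<le> 4 * B^2 * sqrt (5 * L * V / m)"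
proof -
  define r where "r = sqrt (L / (5 * m * V))"
  have r: "r > 0" "r^2 = L / (5 * m * V)" unfolding r_def using L m V by simp_all
  then have L_m: "L / m = 5 * V * r^2" using m V by (simp add: field_simps)
  have "5 * L * V / m = (5 * V * r)^2"
    using L_m m by (simp add: field_simps power2_eq_square)
  then have sqrt_eq: "sqrt (5 * L * V / m) = 5 * V * r"
    using r(1) V by simp
  have first: "12 * \<eta> * B^3 * V = 6 * B^2 * V * r"
    unfolding eta r_def[symmetric] using B by (simp add: field_simps power2_eq_square power3_eq_cube)
  have second: "(B / \<eta>) * L / m = 10 * B^2 * V * r"
    unfolding eta r_def[symmetric] times_divide_eq_right[symmetric] L_m
    using B r(1) by (simp add: field_simps power2_eq_square)
  have "0 \<le> B^2 * V * r" using r(1) V by simp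
  then show ?thesis unfolding first second sqrt_eq by (simp add: algebra_simps)
qed

theorem theorem6:
  fixes D :: "((real ^ 'n::finite) \<times> real) measure"
    and B \<eta> :: real and k m :: nat and wstar :: "real ^ 'n"
  assumes "prob_space D"
    and "sets D = sets borel"
    and "AE p in D. linfnorm (fst p) \<le> 1 \<and> \<bar>snd p\<bar> \<le> B"
    and "B > 0"
    and "k \<ge> 1"
    and "\<eta> = 1 / (2 * B) * sqrt (ln (2 * real CARD('n)) /
             (5 * real m * (l1norm (second_moments D) / real k + 1)))"
    and "real m \<ge> ln (2 * real CARD('n))"
    and "l1norm wstar \<le> B"
  shows "(\<integral>S. measure_pmf.expectation (DDAELR D B \<eta> k m S) (risk D)
            \<partial>(PiM {0..<m} (\<lambda>_. D)))
         \<le> risk D wstar + 4 * B^2 * sqrt (5 * ln (2 * real CARD('n)) *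
              (l1norm (second_moments D) / real k + 1) / real m)"
proof -
  interpret bounded_regression D B by (rule bounded_regression.intro) (rule assms)+
  define V where "V = l1norm (second_moments D) / real k + 1"
  define L where "L = ln (2 * real CARD('n))"
  have "1 \<le> real CARD('n)" by simp
  then have "1 < 2 * real CARD('n)" by linarith
  then have L: "L > 0" unfolding L_def by simp
  with assms(7) have m: "real m > 0" unfolding L_def by linarith
  have V: "V \<ge> 1" unfolding V_def using l1norm_nonneg[of "second_moments D"] by simp
  have eta: "\<eta> = 1 / (2 * B) * sqrt (L / (5 * real m * V))"
    using assms(6) unfolding V_def L_def by simp
  have "\<eta> > 0" unfolding eta using assms(4) L m V by simp
  interpret gaelr_analysis D B "ddaelr_q D" k \<eta> wstar V
  proof unfold_locales
    show "AE p in D. fst p $ i = 0" if "pmf (ddaelr_q D) i = 0" for i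
      by (rule AE_nth_eq_0_if_pmf_ddaelr_q_eq_0[OF that])
    show "(\<integral>p. (fst p $ i)^2 / pmf (ddaelr_q D) i \<partial>D) / real k + (\<integral>p. (fst p $ i)^2 \<partial>D) \<le> V"
      for i unfolding V_def by (rule ddaelr_estimator_moment_le[OF assms(5)])
  qed (use assms(5,8) \<open>\<eta> > 0\<close> in auto)
  have "(\<integral>S. measure_pmf.expectation (DDAELR D B \<eta> k m S) (risk D) \<partial>(PiM {0..<m} (\<lambda>_. D)))
      \<le> risk D wstar + (slack + (B / \<eta>) * L / real m)"
    using integral_expectation_GAELR_risk_le[of m] m by (simp add: DDAELR_def L_def add.assoc)
  also have "slack + (B / \<eta>) * L / real m \<le> 4 * B^2 * sqrt (5 * L * V / real m)"
    unfolding slack_def by (rule step_size_tradeoff[OF assms(4) L m V eta])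
  finally show ?thesis unfolding V_def L_def by (simp add: mult.assoc)
qed

end
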